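(* Let $q$ be a power of an odd prime with $q\equiv 3 \pmod 4$, and let $d\equiv 3 \pmod 4$ be a positive integer. Let $P\subset \mathbb{F}_q^d$ be a set of points and let $S$ be a set of spheres in $\mathbb{F}_q^d$ all of whose radii are squares in $\mathbb{F}_q$. If $|P|\le N$ and $|S|\le N$, then \[ I(P,S)\ll q^{-1}N^2+q^{\frac{d-1}{2}}N. \]
   Context: A sphere in $\mathbb{F}_q^d$ with center $c=(c_1,\dots,c_d)\in\mathbb{F}_q^d$ and radius $r\in\mathbb{F}_q$ is the set $\{x\in\mathbb{F}_q^d : (x_1-c_1)^2+\cdots+(x_d-c_d)^2=r\}$; spheres are indexed by the pair (center, radius). A radius $r$ is a square if $r=t^2$ for some $t\in\mathbb{F}_q$. The number of incidences is $I(P,S)=\#\{(p,s)\in P\times S : p\in s\}$. $X\ll Y$ means $X\le C Y$ for an absolute constant $C>0$. *)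

theory Defs
  imports "HOL-Algebra.Algebra" "HOL-Computational_Algebra.Primes"
begin

definition fq_space :: "('a, 'b) ring_scheme \<Rightarrow> nat \<Rightarrow> 'a list set" where
  "fq_space R d = {x. length x = d \<and> set x \<subseteq> carrier R}"

definition fq_sphere :: "('a, 'b) ring_scheme \<Rightarrow> nat \<Rightarrow> 'a list \<times> 'a \<Rightarrow> 'a list set" where
  "fq_sphere R d s = {x \<in> fq_space R d.
     finsum R (\<lambda>i. (x ! i \<ominus>\<^bsub>R\<^esub> fst s ! i) \<otimes>\<^bsub>R\<^esub> (x ! i \<ominus>\<^bsub>R\<^esub> fst s ! i)) {..<d} = snd s}"

definition square_radius_spheres :: "('a, 'b) ring_scheme \<Rightarrow> nat \<Rightarrow> ('a list \<times> 'a) set" where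
  "square_radius_spheres R d =
     {(c, r). c \<in> fq_space R d \<and> r \<in> carrier R \<and> (\<exists>t\<in>carrier R. r = t \<otimes>\<^bsub>R\<^esub> t)}"

definition incidences :: "('a, 'b) ring_scheme \<Rightarrow> nat \<Rightarrow> 'a list set \<Rightarrow> ('a list \<times> 'a) set \<Rightarrow> nat" where
  "incidences R d P S = card {(p, s). p \<in> P \<and> s \<in> S \<and> p \<in> fq_sphere R d s}"

end

theory Submission
  imports Defs "HOL-Analysis.Convex"
begin

text \<open>Let \<open>f(x)\<close> be the number of spheres of \<open>S\<close> through the point \<open>x\<close>, so that \<open>I(P, S)\<close> is the
  sum of \<open>f\<close> over \<open>P\<close>. By Cauchy-Schwarz, \<open>I(P, S)\<close> exceeds its mean \<open>|P| |S| / q\<close> by at most the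
  square root of \<open>|P|\<close> times the variance of \<open>f\<close> over the whole space, and the variance is controlled by
  two point counts valid when \<open>q\<close> and \<open>d\<close> are \<open>3\<close> modulo \<open>4\<close>: a sphere of square radius has
  \<open>q\<^bsup>d-1\<^esup>\<close> or \<open>q\<^bsup>d-1\<^esup> - q\<^bsup>(d-1)/2\<^esup>\<close> points, and two distinct such spheres share at most
  \<open>(q\<^bsup>d-1\<^esup> + q\<^bsup>(d-1)/2\<^esup>) / q\<close> points.

  The first count follows from the recursion \<open>N\<^sub>n\<^sub>+\<^sub>2(a) = (q + 1) q\<^sup>n - q N\<^sub>n(a)\<close> for the number of
  vectors of squared norm \<open>a\<close>: as \<open>-1\<close> is a nonsquare, every nonzero element is a sum of two squares
  in exactly \<open>q + 1\<close> ways. Two spheres meet in a hyperplane section \<open>{|y|\<^sup>2 = r, y \<cdot> v = t}\<close> of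
  a sphere; translations along \<open>v\<close> and scalings relate the sizes of these sections to each other,
  and summing them over \<open>t\<close> or over \<open>r\<close> gives the sphere and hyperplane counts, from which the
  section sizes can be solved for.\<close>

section \<open>Squares in finite fields\<close>

lemma even_card_involution_without_fixpoints:
  assumes "finite A"
    and "\<And>x. x \<in> A \<Longrightarrow> f x \<in> A" "\<And>x. x \<in> A \<Longrightarrow> f (f x) = x" "\<And>x. x \<in> A \<Longrightarrow> f x \<noteq> x"
  shows "even (card A)"
  using assms
proof (induction "card A" arbitrary: A rule: less_induct)
  case less
  show ?case
  proof (cases "A = {}")
    case False
    then obtain x where x: "x \<in> A" by auto
    have "x \<noteq> f x"
      using less.prems x by metis
    then have pair: "{x, f x} \<subseteq> A" "card {x, f x} = 2"
      using less.prems x by auto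
    have card_A: "card A = card (A - {x, f x}) + 2"
      using card_Diff_subset[OF _ pair(1)] card_mono[OF less.prems(1) pair(1)] pair(2)
        finite_subset[OF pair(1) less.prems(1)] by simp
    have "even (card (A - {x, f x}))"
    proof (rule less.hyps)
      show "card (A - {x, f x}) < card A" "finite (A - {x, f x})"
        using card_A less.prems(1) by simp_all
      fix y assume y: "y \<in> A - {x, f x}"
      then show "f (f y) = y" "f y \<noteq> y"
        using less.prems by auto
      have "f y \<noteq> x" "f y \<noteq> f x"
        using y x less.prems(3)[of y] less.prems(3)[of x] by auto
      then show "f y \<in> A - {x, f x}"
        using y less.prems(2) by auto
    qed
    then show ?thesis using card_A by simp
  qed simp
qed

lemma sum_card_fibres:
  assumes "finite A" "finite B" "g ` A \<subseteq> B"
  shows "(\<Sum>b\<in>B. card {x \<in> A. g x = b}) = card A"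
  using sum.group[OF assms, of "\<lambda>_. 1"] by (simp only: card_eq_sum)

lemma sum_if_mem_const:
  fixes x y :: "'b :: comm_semiring_1"
  assumes "finite A" "T \<subseteq> A"
  shows "(\<Sum>t\<in>A. if t \<in> T then x else y) = of_nat (card T) * x + of_nat (card A - card T) * y"
proof -
  have "(\<Sum>t\<in>A. if t \<in> T then x else y) = (\<Sum>t\<in>T. x) + (\<Sum>t\<in>A - T. y)"
    using assms by (simp add: sum.If_cases Int_absorb1 Diff_eq)
  then show ?thesis
    using assms finite_subset[OF assms(2,1)] by (simp add: card_Diff_subset)
qed

definition squares :: "('a, 'b) ring_scheme \<Rightarrow> 'a set" where
  "squares R = {x \<otimes>\<^bsub>R\<^esub> x | x. x \<in> carrier R}"

context cring
begin

lemma squares_subset_carrier: "squares R \<subseteq> carrier R"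
  unfolding squares_def by auto

lemma square_in_squares [intro, simp]: "x \<in> carrier R \<Longrightarrow> x \<otimes> x \<in> squares R"
  unfolding squares_def by auto

lemma zero_in_squares [simp]: "\<zero> \<in> squares R"
  using square_in_squares[of \<zero>] by simp

lemma one_in_squares [simp]: "\<one> \<in> squares R"
  using square_in_squares[of \<one>] by simp

lemma squaresE:
  assumes "a \<in> squares R"
  obtains x where "x \<in> carrier R" "a = x \<otimes> x"
  using assms unfolding squares_def by auto

lemma squares_mult_closed: "a \<in> squares R \<Longrightarrow> b \<in> squares R \<Longrightarrow> a \<otimes> b \<in> squares R"
  by (elim squaresE) (metis m_closed m_lcomm m_assoc square_in_squares)

end

lemma (in domain) square_eq_square_iff:
  assumes "x \<in> carrier R" "y \<in> carrier R"
  shows "y \<otimes> y = x \<otimes> x \<longleftrightarrow> y = x \<or> y = \<ominus> x"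
proof
  assume "y \<otimes> y = x \<otimes> x"
  then have "(y \<ominus> x) \<otimes> (y \<oplus> x) = \<zero>"
    using assms by algebra
  then have "y \<ominus> x = \<zero> \<or> y \<oplus> x = \<zero>"
    using assms integral_iff by simp
  then show "y = x \<or> y = \<ominus> x"
    using assms by (metis r_right_minus_eq sum_zero_eq_neg)
qed (use assms in \<open>auto simp: l_minus r_minus\<close>)

abbreviation (in ring) two :: 'a where "two \<equiv> \<one> \<oplus> \<one>"

context field
begin

lemma field_inv_closed [simp]: "a \<in> carrier R \<Longrightarrow> a \<noteq> \<zero> \<Longrightarrow> inv a \<in> carrier R"
  using field_Units by auto

lemma field_r_inv [simp]: "a \<in> carrier R \<Longrightarrow> a \<noteq> \<zero> \<Longrightarrow> a \<otimes> inv a = \<one>"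
  using field_Units by auto

lemma field_l_inv [simp]: "a \<in> carrier R \<Longrightarrow> a \<noteq> \<zero> \<Longrightarrow> inv a \<otimes> a = \<one>"
  using field_Units by auto

lemma field_inv_neq_zero [simp]: "a \<in> carrier R \<Longrightarrow> a \<noteq> \<zero> \<Longrightarrow> inv a \<noteq> \<zero>"
  using field_r_inv by fastforce

lemma mult_inv_eq_iff:
  assumes "l \<in> carrier R" "l \<noteq> \<zero>" "x \<in> carrier R" "y \<in> carrier R"
  shows "x \<otimes> inv l = y \<longleftrightarrow> x = y \<otimes> l"
proof -
  have "x \<otimes> inv l = y \<longleftrightarrow> x \<otimes> inv l \<otimes> l = y \<otimes> l"
    using assms by (simp add: m_rcancel)
  also have "x \<otimes> inv l \<otimes> l = x"
    using assms by (simp add: m_assoc)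
  finally show ?thesis .
qed

lemma mult_nonzero_square_in_squares_iff:
  assumes a: "a \<in> squares R" "a \<noteq> \<zero>" and b: "b \<in> carrier R"
  shows "a \<otimes> b \<in> squares R \<longleftrightarrow> b \<in> squares R"
proof
  obtain x where x: "x \<in> carrier R" "a = x \<otimes> x"
    using a(1) by (rule squaresE)
  then have "x \<noteq> \<zero>"
    using a(2) by auto
  assume "a \<otimes> b \<in> squares R"
  then obtain y where y: "y \<in> carrier R" "a \<otimes> b = y \<otimes> y"
    by (auto elim: squaresE)
  have "(y \<otimes> inv x) \<otimes> (y \<otimes> inv x) = (y \<otimes> y) \<otimes> (inv x \<otimes> inv x)"
    using x y field_inv_closed[OF x(1) \<open>x \<noteq> \<zero>\<close>] by algebra
  also have "\<dots> = b \<otimes> ((x \<otimes> inv x) \<otimes> (x \<otimes> inv x))"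
    using x y b field_inv_closed[OF x(1) \<open>x \<noteq> \<zero>\<close>]
    by (simp only: flip: \<open>a \<otimes> b = y \<otimes> y\<close>) algebra
  also have "\<dots> = b"
    using x b \<open>x \<noteq> \<zero>\<close> by simp
  finally show "b \<in> squares R"
    using x y \<open>x \<noteq> \<zero>\<close> by (metis m_closed field_inv_closed square_in_squares)
qed (use a squares_mult_closed in auto)

end

lemma (in cring) sum_two_squares_mult:
  assumes "x \<in> carrier R" "y \<in> carrier R" "u \<in> carrier R" "w \<in> carrier R"
  shows "(x \<otimes> u \<ominus> y \<otimes> w) \<otimes> (x \<otimes> u \<ominus> y \<otimes> w) \<oplus> (x \<otimes> w \<oplus> y \<otimes> u) \<otimes> (x \<otimes> w \<oplus> y \<otimes> u)
    = (x \<otimes> x \<oplus> y \<otimes> y) \<otimes> (u \<otimes> u \<oplus> w \<otimes> w)"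
  using assms by algebra

lemma (in domain) inj_on_mult_two_squares:
  assumes uw: "u \<in> carrier R" "w \<in> carrier R" and c: "u \<otimes> u \<oplus> w \<otimes> w \<noteq> \<zero>"
  shows "inj_on (\<lambda>(x, y). (x \<otimes> u \<ominus> y \<otimes> w, x \<otimes> w \<oplus> y \<otimes> u)) (carrier R \<times> carrier R)"
proof (rule inj_onI, clarify)
  fix x y x' y'
  assume xy: "x \<in> carrier R" "y \<in> carrier R" "x' \<in> carrier R" "y' \<in> carrier R"
    and e1: "x \<otimes> u \<ominus> y \<otimes> w = x' \<otimes> u \<ominus> y' \<otimes> w" and e2: "x \<otimes> w \<oplus> y \<otimes> u = x' \<otimes> w \<oplus> y' \<otimes> u"
  have "(x \<ominus> x') \<otimes> (u \<otimes> u \<oplus> w \<otimes> w) = u \<otimes> ((x \<otimes> u \<ominus> y \<otimes> w) \<ominus> (x' \<otimes> u \<ominus> y' \<otimes> w))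
      \<oplus> w \<otimes> ((x \<otimes> w \<oplus> y \<otimes> u) \<ominus> (x' \<otimes> w \<oplus> y' \<otimes> u))"
    using xy uw by algebra
  also have "\<dots> = \<zero>"
    unfolding e1 e2 using xy uw by algebra
  finally have x: "x = x'"
    using integral_iff c xy uw by simp
  have "(y \<ominus> y') \<otimes> (u \<otimes> u \<oplus> w \<otimes> w) = u \<otimes> ((x \<otimes> w \<oplus> y \<otimes> u) \<ominus> (x' \<otimes> w \<oplus> y' \<otimes> u))
      \<ominus> w \<otimes> ((x \<otimes> u \<ominus> y \<otimes> w) \<ominus> (x' \<otimes> u \<ominus> y' \<otimes> w))"
    unfolding x using xy uw by algebra
  also have "\<dots> = \<zero>"
    unfolding e1 e2 using xy uw by algebra
  finally have "y = y'"
    using integral_iff c xy uw by simp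
  then show "x = x' \<and> y = y'"
    using x by simp
qed

locale odd_finite_field = field +
  assumes finite_carrier: "finite (carrier R)"
    and odd_card: "odd (card (carrier R))"
begin

abbreviation q :: nat where "q \<equiv> card (carrier R)"

text \<open>Translation by \<open>\<one>\<close> pairs off the elements of a field of characteristic two.\<close>

lemma two_neq_zero: "two \<noteq> \<zero>"
proof
  assume two: "two = \<zero>"
  have "even q"
  proof (rule even_card_involution_without_fixpoints[OF finite_carrier, of "\<lambda>x. x \<oplus> \<one>"])
    fix x assume x: "x \<in> carrier R"
    then show "x \<oplus> \<one> \<oplus> \<one> = x"
      using two by (simp add: a_assoc)
    show "x \<oplus> \<one> \<noteq> x"
      using x by (metis l_zero one_closed one_not_zero r_zero zero_closed add.right_cancel a_comm)
  qed simp
  then show False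
    using odd_card by simp
qed

lemma add_self_eq_zero_iff: "x \<in> carrier R \<Longrightarrow> x \<oplus> x = \<zero> \<longleftrightarrow> x = \<zero>"
  using two_neq_zero integral_iff[of two x] by (simp add: l_distr)

lemma neg_eq_self_iff: "x \<in> carrier R \<Longrightarrow> \<ominus> x = x \<longleftrightarrow> x = \<zero>"
  using add_self_eq_zero_iff by (metis add.inv_closed l_neg r_neg add.inv_solve_left add.inv_one)

lemma card_square_roots:
  assumes "x \<in> carrier R" "x \<noteq> \<zero>"
  shows "card {y \<in> carrier R. y \<otimes> y = x \<otimes> x} = 2"
proof -
  have "{y \<in> carrier R. y \<otimes> y = x \<otimes> x} = {x, \<ominus> x}"
    using assms square_eq_square_iff by auto
  then show ?thesis
    using assms neg_eq_self_iff by (simp add: eq_commute[of x])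
qed

lemma card_nonzero_squares: "2 * card (squares R - {\<zero>}) = q - 1"
proof -
  let ?roots = "\<lambda>s. {y \<in> carrier R. y \<otimes> y = s}"
  have "carrier R - {\<zero>} = (\<Union>s\<in>squares R - {\<zero>}. ?roots s)"
    using integral_iff by (auto simp: squares_def)
  then have "card (carrier R - {\<zero>}) = (\<Sum>s\<in>squares R - {\<zero>}. card (?roots s))"
    using finite_carrier squares_subset_carrier
    by (auto intro!: card_UN_disjoint intro: finite_subset)
  also have "\<dots> = (\<Sum>s\<in>squares R - {\<zero>}. 2)"
  proof (intro sum.cong refl)
    fix s assume s: "s \<in> squares R - {\<zero>}"
    then obtain x where x: "x \<in> carrier R" "s = x \<otimes> x"
      by (blast elim: squaresE)
    then have "x \<noteq> \<zero>"
      using s by auto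
    then show "card (?roots s) = 2"
      using x card_square_roots by simp
  qed
  finally show ?thesis
    using finite_carrier by simp
qed

lemma card_squares: "2 * card (squares R) = q + 1"
proof -
  have "card (squares R) = card (squares R - {\<zero>}) + 1"
    using finite_carrier squares_subset_carrier finite_subset card.remove[OF _ zero_in_squares]
    by fastforce
  then show ?thesis
    using card_nonzero_squares odd_pos[OF odd_card] by arith
qed

lemma card_nonsquares: "card (carrier R - squares R) = card (squares R - {\<zero>})"
  using card_Diff_subset[OF finite_subset[OF squares_subset_carrier finite_carrier]
      squares_subset_carrier] card_squares card_nonzero_squares odd_card
  by (simp add: odd_pos)

text \<open>Pigeonhole: the \<open>(q + 1) / 2\<close> squares \<open>s\<close> and the \<open>(q + 1) / 2\<close> elements \<open>c \<ominus> s\<close> must meet.\<close>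

lemma sum_of_two_squares:
  assumes c: "c \<in> carrier R"
  obtains u w where "u \<in> carrier R" "w \<in> carrier R" "c = u \<otimes> u \<oplus> w \<otimes> w"
proof -
  let ?T = "(\<lambda>s. c \<ominus> s) ` squares R"
  have fin: "finite (squares R)"
    using finite_carrier squares_subset_carrier finite_subset by blast
  have "inj_on (\<lambda>s. c \<ominus> s) (squares R)"
  proof (rule inj_onI)
    fix s s' assume "s \<in> squares R" "s' \<in> squares R" and eq: "c \<ominus> s = c \<ominus> s'"
    then have "s \<in> carrier R" "s' \<in> carrier R"
      using squares_subset_carrier by auto
    then have "s = c \<ominus> (c \<ominus> s)" "s' = c \<ominus> (c \<ominus> s')"
      using c by algebra+
    then show "s = s'"
      using eq by metis
  qed
  then have "card (squares R) + card ?T = q + 1"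
    using card_squares card_image by fastforce
  moreover have "card (squares R \<union> ?T) \<le> q"
    using c squares_subset_carrier finite_carrier by (intro card_mono) auto
  ultimately have "squares R \<inter> ?T \<noteq> {}"
    using card_Un_Int[OF fin finite_imageI[OF fin]] by auto
  then obtain u w where uw: "u \<in> carrier R" "w \<in> carrier R" "u \<otimes> u = c \<ominus> w \<otimes> w"
    by (auto elim!: squaresE)
  then have "c = u \<otimes> u \<oplus> w \<otimes> w"
    using c by algebra
  then show ?thesis
    using uw that by blast
qed

lemma nonsquare_mult_nonsquare:
  assumes a: "a \<in> carrier R - squares R" and b: "b \<in> carrier R - squares R"
  shows "a \<otimes> b \<in> squares R"
proof -
  have a0: "a \<noteq> \<zero>" and aR: "a \<in> carrier R"
    using a by auto
  let ?M = "(\<otimes>) a ` (squares R - {\<zero>})"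
  have "?M \<subseteq> carrier R - squares R"
  proof
    fix y assume "y \<in> ?M"
    then obtain s where s: "s \<in> squares R" "s \<noteq> \<zero>" "y = a \<otimes> s"
      by auto
    then have "s \<otimes> a \<notin> squares R"
      using a mult_nonzero_square_in_squares_iff by blast
    then show "y \<in> carrier R - squares R"
      using s aR squares_subset_carrier by (auto simp: m_comm)
  qed
  moreover have "inj_on ((\<otimes>) a) (squares R - {\<zero>})"
  proof (rule inj_onI)
    fix s s' assume "s \<in> squares R - {\<zero>}" "s' \<in> squares R - {\<zero>}" "a \<otimes> s = a \<otimes> s'"
    then show "s = s'"
      using a0 aR squares_subset_carrier m_lcancel by blast
  qed
  then have "card ?M = card (carrier R - squares R)"
    using card_image card_nonsquares by metis
  ultimately have "?M = carrier R - squares R"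
    using finite_carrier by (intro card_subset_eq) auto
  then obtain x where x: "x \<in> carrier R" "b = a \<otimes> (x \<otimes> x)"
    using b by (auto elim!: squaresE)
  then have "a \<otimes> b = (a \<otimes> x) \<otimes> (a \<otimes> x)"
    using aR by algebra
  then show ?thesis
    using x aR by simp
qed

lemma same_square_class:
  assumes a: "a \<in> carrier R" "a \<noteq> \<zero>" and b: "b \<in> carrier R" "b \<noteq> \<zero>"
    and same_class: "a \<in> squares R \<longleftrightarrow> b \<in> squares R"
  obtains k where "k \<in> carrier R" "k \<noteq> \<zero>" "b = k \<otimes> k \<otimes> a"
proof -
  have "a \<otimes> b \<in> squares R"
    using a b same_class squares_mult_closed nonsquare_mult_nonsquare by blast
  then obtain z where z: "z \<in> carrier R" "a \<otimes> b = z \<otimes> z"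
    by (auto elim: squaresE)
  have "z \<noteq> \<zero>"
    using z a b integral_iff by auto
  moreover have "b = (z \<otimes> inv a) \<otimes> (z \<otimes> inv a) \<otimes> a"
  proof -
    have "(z \<otimes> inv a) \<otimes> (z \<otimes> inv a) \<otimes> a = (z \<otimes> z) \<otimes> inv a \<otimes> (inv a \<otimes> a)"
      using z a field_inv_closed[OF a] by algebra
    also have "\<dots> = (a \<otimes> b) \<otimes> inv a"
      using z a b by (simp add: z(2)[symmetric])
    also have "\<dots> = b \<otimes> (a \<otimes> inv a)"
      using a b field_inv_closed[OF a] by algebra
    finally show ?thesis
      using a b by simp
  qed
  ultimately show ?thesis
    using that[of "z \<otimes> inv a"] z a integral_iff by simp
qed

end

context odd_finite_field
begin

definition two_square_reps :: "'a \<Rightarrow> nat" where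
  "two_square_reps b = card {(u, w) \<in> carrier R \<times> carrier R. u \<otimes> u \<oplus> w \<otimes> w = b}"

lemma sum_two_square_reps: "(\<Sum>b\<in>carrier R. two_square_reps b) = q * q"
proof -
  let ?g = "\<lambda>(u, w). u \<otimes> u \<oplus> w \<otimes> w"
  have "(\<Sum>b\<in>carrier R. two_square_reps b)
      = (\<Sum>b\<in>carrier R. card {p \<in> carrier R \<times> carrier R. ?g p = b})"
    unfolding two_square_reps_def by (intro sum.cong refl, rule arg_cong[where f = card]) auto
  also have "\<dots> = card (carrier R \<times> carrier R)"
    using finite_carrier by (intro sum_card_fibres) auto
  finally show ?thesis
    by (simp add: card_cartesian_product)
qed

text \<open>Multiplication by \<open>u + i w\<close>, where \<open>u\<^sup>2 + w\<^sup>2 = b' / b\<close>, maps representations of \<open>b\<close> to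
  representations of \<open>b'\<close>.\<close>

lemma two_square_reps_le:
  assumes b: "b \<in> carrier R" "b \<noteq> \<zero>" and b': "b' \<in> carrier R" "b' \<noteq> \<zero>"
  shows "two_square_reps b \<le> two_square_reps b'"
proof -
  let ?c = "b' \<otimes> inv b"
  have c: "?c \<in> carrier R" "?c \<noteq> \<zero>"
    using b b' integral_iff by auto
  obtain u w where uw: "u \<in> carrier R" "w \<in> carrier R" "?c = u \<otimes> u \<oplus> w \<otimes> w"
    using sum_of_two_squares[OF c(1)] by blast
  let ?f = "\<lambda>(x, y). (x \<otimes> u \<ominus> y \<otimes> w, x \<otimes> w \<oplus> y \<otimes> u)"
  let ?A = "{(x, y) \<in> carrier R \<times> carrier R. x \<otimes> x \<oplus> y \<otimes> y = b}"
  let ?B = "{(x, y) \<in> carrier R \<times> carrier R. x \<otimes> x \<oplus> y \<otimes> y = b'}"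
  have "?f ` ?A \<subseteq> ?B"
  proof
    fix z assume "z \<in> ?f ` ?A"
    then obtain x y where xy: "x \<in> carrier R" "y \<in> carrier R" "b = x \<otimes> x \<oplus> y \<otimes> y"
      and z: "z = ?f (x, y)"
      by auto
    have "b \<otimes> ?c = b' \<otimes> (b \<otimes> inv b)"
      using b b' field_inv_closed[OF b] by algebra
    then show "z \<in> ?B"
      using sum_two_squares_mult[OF xy(1,2) uw(1,2)] z xy uw b b' by simp
  qed
  moreover have "inj_on ?f ?A"
    using inj_on_mult_two_squares[OF uw(1,2) c(2)[unfolded uw(3)]] by (rule inj_on_subset) fast
  moreover have "finite ?B"
    by (rule finite_subset[of _ "carrier R \<times> carrier R"]) (auto simp: finite_carrier)
  ultimately show ?thesis
    unfolding two_square_reps_def by (intro card_inj_on_le)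
qed

end

locale finite_field_3_mod_4 = odd_finite_field +
  assumes card_mod_4: "card (carrier R) mod 4 = 3"
begin

lemma card_gt_2: "q > 2"
  using card_mod_4 mod_less_eq_dividend[of q 4] by linarith

text \<open>If \<open>\<ominus>\<one>\<close> were a square, negation would pair off the \<open>(q - 1) / 2\<close> nonzero squares,
  an odd number.\<close>

lemma minus_one_not_square: "\<ominus> \<one> \<notin> squares R"
proof
  assume "\<ominus> \<one> \<in> squares R"
  then obtain i where i: "i \<in> carrier R" "\<ominus> \<one> = i \<otimes> i"
    by (rule squaresE)
  have "even (card (squares R - {\<zero>}))"
  proof (rule even_card_involution_without_fixpoints[of _ "\<lambda>s. \<ominus> s"])
    show "finite (squares R - {\<zero>})"
      using finite_carrier squares_subset_carrier finite_subset by blast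
    fix s assume s: "s \<in> squares R - {\<zero>}"
    then have sR: "s \<in> carrier R"
      using squares_subset_carrier by auto
    have "\<ominus> s = (\<ominus> \<one>) \<otimes> s"
      using sR by (simp add: l_minus)
    then show "\<ominus> s \<in> squares R - {\<zero>}"
      using s sR i squares_mult_closed[of "\<ominus> \<one>" s] by auto
    show "\<ominus> (\<ominus> s) = s" "\<ominus> s \<noteq> s"
      using s sR neg_eq_self_iff by auto
  qed
  moreover have "odd (card (squares R - {\<zero>}))"
    using card_nonzero_squares card_mod_4 by presburger
  ultimately show False
    by simp
qed

lemma two_squares_eq_zero_iff:
  assumes "u \<in> carrier R" "w \<in> carrier R"
  shows "u \<otimes> u \<oplus> w \<otimes> w = \<zero> \<longleftrightarrow> u = \<zero> \<and> w = \<zero>"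
proof
  assume sum: "u \<otimes> u \<oplus> w \<otimes> w = \<zero>"
  have "w = \<zero>"
  proof (rule ccontr)
    assume w: "w \<noteq> \<zero>"
    have "(u \<otimes> inv w) \<otimes> (u \<otimes> inv w) = (u \<otimes> u \<oplus> w \<otimes> w) \<otimes> (inv w \<otimes> inv w) \<ominus> (w \<otimes> inv w) \<otimes> (w \<otimes> inv w)"
      using assms field_inv_closed[OF assms(2) w] by algebra
    also have "\<dots> = \<ominus> \<one>"
      using sum assms w by (simp add: a_minus_def)
    finally show False
      using minus_one_not_square assms w by (metis m_closed field_inv_closed square_in_squares)
  qed
  then show "u = \<zero> \<and> w = \<zero>"
    using sum assms integral_iff by auto
qed simp

lemma two_square_reps_zero: "two_square_reps \<zero> = 1"
proof -
  have "{(u, w) \<in> carrier R \<times> carrier R. u \<otimes> u \<oplus> w \<otimes> w = \<zero>} = {(\<zero>, \<zero>)}"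
    using two_squares_eq_zero_iff by auto
  then show ?thesis
    unfolding two_square_reps_def by simp
qed

lemma two_square_reps_nonzero:
  assumes b: "b \<in> carrier R" "b \<noteq> \<zero>"
  shows "two_square_reps b = q + 1"
proof -
  have const: "two_square_reps c = two_square_reps b" if "c \<in> carrier R - {\<zero>}" for c
    using two_square_reps_le[of b c] two_square_reps_le[of c b] b that by auto
  have "q * q = (\<Sum>c\<in>carrier R. two_square_reps c)"
    using sum_two_square_reps by simp
  also have "\<dots> = two_square_reps \<zero> + (\<Sum>c\<in>carrier R - {\<zero>}. two_square_reps c)"
    using finite_carrier by (simp add: sum.remove)
  also have "\<dots> = 1 + (q - 1) * two_square_reps b"
    using const two_square_reps_zero finite_carrier by simp
  finally have "(q - 1) * (q + 1) = (q - 1) * two_square_reps b"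
    using card_gt_2 by (cases q) (simp_all add: algebra_simps)
  moreover have "q - 1 \<noteq> 0"
    using card_gt_2 by simp
  ultimately show ?thesis
    by (metis mult_left_cancel)
qed

end

lemma finite_field_3_mod_4I:
  "field R \<Longrightarrow> finite (carrier R) \<Longrightarrow> card (carrier R) mod 4 = 3 \<Longrightarrow> finite_field_3_mod_4 R"
  unfolding finite_field_3_mod_4_def finite_field_3_mod_4_axioms_def odd_finite_field_def
    odd_finite_field_axioms_def by presburger

section \<open>Vectors over a ring as lists\<close>

fun dot :: "('a, 'b) ring_scheme \<Rightarrow> 'a list \<Rightarrow> 'a list \<Rightarrow> 'a" where
  "dot R (a # x) (b # y) = a \<otimes>\<^bsub>R\<^esub> b \<oplus>\<^bsub>R\<^esub> dot R x y"
| "dot R _ _ = \<zero>\<^bsub>R\<^esub>"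

abbreviation sq_norm :: "('a, 'b) ring_scheme \<Rightarrow> 'a list \<Rightarrow> 'a" where
  "sq_norm R x \<equiv> dot R x x"

definition vec_add :: "('a, 'b) ring_scheme \<Rightarrow> 'a list \<Rightarrow> 'a list \<Rightarrow> 'a list" where
  "vec_add R x y = map2 (\<oplus>\<^bsub>R\<^esub>) x y"

definition vec_sub :: "('a, 'b) ring_scheme \<Rightarrow> 'a list \<Rightarrow> 'a list \<Rightarrow> 'a list" where
  "vec_sub R x y = map2 (\<lambda>a b. a \<ominus>\<^bsub>R\<^esub> b) x y"

definition vec_smult :: "('a, 'b) ring_scheme \<Rightarrow> 'a \<Rightarrow> 'a list \<Rightarrow> 'a list" where
  "vec_smult R c x = map ((\<otimes>\<^bsub>R\<^esub>) c) x"

lemma vec_ops_Nil [simp]: "vec_add R [] y = []" "vec_sub R [] y = []" "vec_smult R c [] = []"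
  by (simp_all add: vec_add_def vec_sub_def vec_smult_def)

lemma vec_ops_Cons [simp]:
  "vec_add R (a # x) (b # y) = (a \<oplus>\<^bsub>R\<^esub> b) # vec_add R x y"
  "vec_sub R (a # x) (b # y) = (a \<ominus>\<^bsub>R\<^esub> b) # vec_sub R x y"
  "vec_smult R c (a # x) = (c \<otimes>\<^bsub>R\<^esub> a) # vec_smult R c x"
  by (simp_all add: vec_add_def vec_sub_def vec_smult_def)

lemma fq_space_0 [simp]: "fq_space R 0 = {[]}"
  unfolding fq_space_def by auto

lemma Cons_in_fq_space_iff [simp]:
  "a # x \<in> fq_space R (Suc n) \<longleftrightarrow> a \<in> carrier R \<and> x \<in> fq_space R n"
  unfolding fq_space_def by auto

lemma fq_space_SucE:
  assumes "x \<in> fq_space R (Suc n)"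
  obtains a y where "x = a # y" "a \<in> carrier R" "y \<in> fq_space R n"
  using assms unfolding fq_space_def by (cases x) auto

lemma nth_in_carrier: "x \<in> fq_space R n \<Longrightarrow> i < n \<Longrightarrow> x ! i \<in> carrier R"
  unfolding fq_space_def by auto

lemma replicate_in_fq_space: "a \<in> carrier R \<Longrightarrow> replicate n a \<in> fq_space R n"
  unfolding fq_space_def by auto

lemma finite_fq_space [simp]: "finite (carrier R) \<Longrightarrow> finite (fq_space R n)"
  unfolding fq_space_def using finite_lists_length_eq by (simp add: conj_commute)

lemma card_fq_space: "finite (carrier R) \<Longrightarrow> card (fq_space R n) = card (carrier R) ^ n"
  unfolding fq_space_def using card_lists_length_eq by (simp add: conj_commute)

lemma fq_space_induct [consumes 1, case_names Nil Cons]: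
  assumes "x \<in> fq_space R n"
    and "P 0 []"
    and "\<And>a x n. a \<in> carrier R \<Longrightarrow> x \<in> fq_space R n \<Longrightarrow> P n x \<Longrightarrow> P (Suc n) (a # x)"
  shows "P n x"
  using assms(1)
proof (induction n arbitrary: x)
  case (Suc n)
  obtain a x' where x: "x = a # x'" "a \<in> carrier R" "x' \<in> fq_space R n"
    using Suc.prems by (rule fq_space_SucE)
  show ?case
    unfolding x(1) using assms(3)[OF x(2,3) Suc.IH[OF x(3)]] .
qed (use assms(2) in simp)

lemma fq_space_induct2 [consumes 2, case_names Nil Cons]:
  assumes "x \<in> fq_space R n" "y \<in> fq_space R n"
    and "P 0 [] []"
    and "\<And>a b x y n. a \<in> carrier R \<Longrightarrow> b \<in> carrier R \<Longrightarrow> x \<in> fq_space R n \<Longrightarrow>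
      y \<in> fq_space R n \<Longrightarrow> P n x y \<Longrightarrow> P (Suc n) (a # x) (b # y)"
  shows "P n x y"
  using assms(1,2)
proof (induction n arbitrary: x y)
  case (Suc n)
  obtain a x' where x: "x = a # x'" "a \<in> carrier R" "x' \<in> fq_space R n"
    using Suc.prems(1) by (rule fq_space_SucE)
  obtain b y' where y: "y = b # y'" "b \<in> carrier R" "y' \<in> fq_space R n"
    using Suc.prems(2) by (rule fq_space_SucE)
  show ?case
    unfolding x(1) y(1) using assms(4)[OF x(2) y(2) x(3) y(3) Suc.IH[OF x(3) y(3)]] .
qed (use assms(3) in simp)

lemma fq_space_induct3 [consumes 3, case_names Nil Cons]:
  assumes "x \<in> fq_space R n" "y \<in> fq_space R n" "z \<in> fq_space R n"
    and "P 0 [] [] []"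
    and "\<And>a b c x y z n. a \<in> carrier R \<Longrightarrow> b \<in> carrier R \<Longrightarrow> c \<in> carrier R \<Longrightarrow>
      x \<in> fq_space R n \<Longrightarrow> y \<in> fq_space R n \<Longrightarrow> z \<in> fq_space R n \<Longrightarrow>
      P n x y z \<Longrightarrow> P (Suc n) (a # x) (b # y) (c # z)"
  shows "P n x y z"
  using assms(1-3)
proof (induction n arbitrary: x y z)
  case (Suc n)
  obtain a x' where x: "x = a # x'" "a \<in> carrier R" "x' \<in> fq_space R n"
    using Suc.prems(1) by (rule fq_space_SucE)
  obtain b y' where y: "y = b # y'" "b \<in> carrier R" "y' \<in> fq_space R n"
    using Suc.prems(2) by (rule fq_space_SucE)
  obtain c z' where z: "z = c # z'" "c \<in> carrier R" "z' \<in> fq_space R n"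
    using Suc.prems(3) by (rule fq_space_SucE)
  show ?case
    unfolding x(1) y(1) z(1)
    using assms(5)[OF x(2) y(2) z(2) x(3) y(3) z(3) Suc.IH[OF x(3) y(3) z(3)]] .
qed (use assms(4) in simp)

context cring
begin

lemma dot_closed [intro]:
  "x \<in> fq_space R n \<Longrightarrow> y \<in> fq_space R n \<Longrightarrow> dot R x y \<in> carrier R"
  by (induction n x y rule: fq_space_induct2) auto

lemma vec_add_closed [intro, simp]:
  "x \<in> fq_space R n \<Longrightarrow> y \<in> fq_space R n \<Longrightarrow> vec_add R x y \<in> fq_space R n"
  by (induction n x y rule: fq_space_induct2) auto

lemma vec_sub_closed [intro, simp]:
  "x \<in> fq_space R n \<Longrightarrow> y \<in> fq_space R n \<Longrightarrow> vec_sub R x y \<in> fq_space R n"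
  by (induction n x y rule: fq_space_induct2) auto

lemma vec_smult_closed [intro, simp]:
  "x \<in> fq_space R n \<Longrightarrow> c \<in> carrier R \<Longrightarrow> vec_smult R c x \<in> fq_space R n"
  by (induction n x rule: fq_space_induct) auto

lemma dot_replicate_zero: "v \<in> fq_space R n \<Longrightarrow> dot R (replicate n \<zero>) v = \<zero>"
  by (induction n v rule: fq_space_induct) auto

lemma vec_add_replicate_zero: "c \<in> fq_space R n \<Longrightarrow> vec_add R (replicate n \<zero>) c = c"
  by (induction n c rule: fq_space_induct) auto

lemma dot_add_smult:
  "y \<in> fq_space R n \<Longrightarrow> w \<in> fq_space R n \<Longrightarrow> v \<in> fq_space R n \<Longrightarrow> m \<in> carrier R \<Longrightarrow>
    dot R (vec_add R y (vec_smult R m w)) v = dot R y v \<oplus> m \<otimes> dot R w v"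
proof (induction n y w v rule: fq_space_induct3)
  case (Cons a b c x y z n)
  then show ?case
    using dot_closed[OF Cons.hyps(4,6)] dot_closed[OF Cons.hyps(5,6)] by simp algebra
qed simp

lemma dot_smult:
  "y \<in> fq_space R n \<Longrightarrow> v \<in> fq_space R n \<Longrightarrow> k \<in> carrier R \<Longrightarrow>
    dot R (vec_smult R k y) v = k \<otimes> dot R y v"
proof (induction n y v rule: fq_space_induct2)
  case (Cons a b x y n)
  then show ?case
    using dot_closed[OF Cons.hyps(3,4)] by simp algebra
qed simp

lemma sq_norm_add_smult:
  "y \<in> fq_space R n \<Longrightarrow> v \<in> fq_space R n \<Longrightarrow> m \<in> carrier R \<Longrightarrow>
    sq_norm R (vec_add R y (vec_smult R m v))
      = sq_norm R y \<oplus> two \<otimes> m \<otimes> dot R y v \<oplus> m \<otimes> m \<otimes> sq_norm R v"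
proof (induction n y v rule: fq_space_induct2)
  case (Cons a b x y n)
  then show ?case
    using dot_closed[OF Cons.hyps(3,3)] dot_closed[OF Cons.hyps(3,4)] dot_closed[OF Cons.hyps(4,4)]
    by simp algebra
qed simp

lemma sq_norm_smult:
  "y \<in> fq_space R n \<Longrightarrow> k \<in> carrier R \<Longrightarrow> sq_norm R (vec_smult R k y) = k \<otimes> k \<otimes> sq_norm R y"
proof (induction n y rule: fq_space_induct)
  case (Cons a x n)
  then show ?case
    using dot_closed[OF Cons.hyps(2,2)] by simp algebra
qed simp

lemma sq_norm_sub:
  "y \<in> fq_space R n \<Longrightarrow> v \<in> fq_space R n \<Longrightarrow>
    sq_norm R (vec_sub R y v) = sq_norm R y \<ominus> two \<otimes> dot R y v \<oplus> sq_norm R v"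
proof (induction n y v rule: fq_space_induct2)
  case (Cons a b x y n)
  then show ?case
    using dot_closed[OF Cons.hyps(3,3)] dot_closed[OF Cons.hyps(3,4)] dot_closed[OF Cons.hyps(4,4)]
    by simp algebra
qed (simp add: a_minus_def)

lemma vec_add_smult_cancel:
  "y \<in> fq_space R n \<Longrightarrow> w \<in> fq_space R n \<Longrightarrow> m \<in> carrier R \<Longrightarrow>
    vec_add R (vec_add R y (vec_smult R m w)) (vec_smult R (\<ominus> m) w) = y"
  by (induction n y w rule: fq_space_induct2) (auto, algebra)

lemma vec_sub_add_cancel: "y \<in> fq_space R n \<Longrightarrow> c \<in> fq_space R n \<Longrightarrow> vec_sub R (vec_add R y c) c = y"
  by (induction n y c rule: fq_space_induct2) (auto, algebra)

lemma vec_add_sub_cancel: "y \<in> fq_space R n \<Longrightarrow> c \<in> fq_space R n \<Longrightarrow> vec_add R (vec_sub R y c) c = y"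
  by (induction n y c rule: fq_space_induct2) (auto, algebra)

lemma inj_on_vec_add_smult:
  "w \<in> fq_space R n \<Longrightarrow> m \<in> carrier R \<Longrightarrow> inj_on (\<lambda>y. vec_add R y (vec_smult R m w)) (fq_space R n)"
  by (rule inj_onI) (metis vec_add_smult_cancel)

lemma inj_on_vec_sub: "c \<in> fq_space R n \<Longrightarrow> inj_on (\<lambda>x. vec_sub R x c) (fq_space R n)"
  by (rule inj_onI) (metis vec_add_sub_cancel)

lemma vec_sub_sub_sub:
  "x \<in> fq_space R n \<Longrightarrow> c \<in> fq_space R n \<Longrightarrow> c' \<in> fq_space R n \<Longrightarrow>
    vec_sub R (vec_sub R x c) (vec_sub R c' c) = vec_sub R x c'"
  by (induction n x c c' rule: fq_space_induct3) (auto, algebra)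

lemma finsum_sq_diff_eq_sq_norm:
  "x \<in> fq_space R n \<Longrightarrow> c \<in> fq_space R n \<Longrightarrow>
    (\<Oplus>i\<in>{..<n}. (x ! i \<ominus> c ! i) \<otimes> (x ! i \<ominus> c ! i)) = sq_norm R (vec_sub R x c)"
proof (induction n x c rule: fq_space_induct2)
  case (Cons a b x y n)
  let ?g = "\<lambda>i. ((a # x) ! i \<ominus> (b # y) ! i) \<otimes> ((a # x) ! i \<ominus> (b # y) ! i)"
  have "?g \<in> {..<Suc n} \<rightarrow> carrier R"
    using Cons.hyps nth_in_carrier[of x R n] nth_in_carrier[of y R n]
    by (auto simp: less_Suc_eq_0_disj)
  then have "finsum R ?g {..<Suc n} = ?g 0 \<oplus> finsum R (\<lambda>i. ?g (Suc i)) {..<n}"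
    by (simp add: lessThan_Suc_eq_insert_0 finsum_insert finsum_reindex Pi_def)
  then show ?case
    using Cons.IH by simp
qed simp

lemma fq_sphere_eq:
  "c \<in> fq_space R d \<Longrightarrow>
    fq_sphere R d (c, r) = {x \<in> fq_space R d. sq_norm R (vec_sub R x c) = r}"
  unfolding fq_sphere_def using finsum_sq_diff_eq_sq_norm by auto

end

lemma finite_square_radius_spheres:
  "finite (carrier R) \<Longrightarrow> finite (square_radius_spheres R d)"
  by (rule finite_subset[of _ "fq_space R d \<times> carrier R"]) (auto simp: square_radius_spheres_def)

lemma fq_sphere_subset: "fq_sphere R d s \<subseteq> fq_space R d"
  unfolding fq_sphere_def by auto

lemma (in field) exists_dot_eq_one:
  "v \<in> fq_space R n \<Longrightarrow> v \<noteq> replicate n \<zero> \<Longrightarrow> \<exists>w\<in>fq_space R n. dot R w v = \<one>"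
proof (induction n v rule: fq_space_induct)
  case (Cons b v n)
  show ?case
  proof (cases "b = \<zero>")
    case True
    then obtain w where "w \<in> fq_space R n" "dot R w v = \<one>"
      using Cons by auto
    then show ?thesis
      using True by (intro bexI[of _ "\<zero> # w"]) auto
  next
    case False
    then show ?thesis
      using Cons.hyps
      by (intro bexI[of _ "inv b # replicate n \<zero>"]) (auto simp: dot_replicate_zero replicate_in_fq_space)
  qed
qed simp

lemma (in field) vec_smult_inv_cancel:
  "y \<in> fq_space R n \<Longrightarrow> k \<in> carrier R \<Longrightarrow> k \<noteq> \<zero> \<Longrightarrow> vec_smult R (inv k) (vec_smult R k y) = y"
  by (induction n y rule: fq_space_induct) (auto simp: m_assoc[symmetric])

lemma (in field) inj_on_vec_smult:
  "k \<in> carrier R \<Longrightarrow> k \<noteq> \<zero> \<Longrightarrow> inj_on (vec_smult R k) (fq_space R n)"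
  by (rule inj_onI) (metis vec_smult_inv_cancel)

section \<open>Points on spheres and on their hyperplane sections\<close>

definition sphere_count :: "('a, 'b) ring_scheme \<Rightarrow> nat \<Rightarrow> 'a \<Rightarrow> nat" where
  "sphere_count R n a = card {x \<in> fq_space R n. sq_norm R x = a}"

definition section_count :: "('a, 'b) ring_scheme \<Rightarrow> nat \<Rightarrow> 'a list \<Rightarrow> 'a \<Rightarrow> 'a \<Rightarrow> nat" where
  "section_count R n v r t = card {y \<in> fq_space R n. sq_norm R y = r \<and> dot R y v = t}"

context cring
begin

lemma card_fq_sphere:
  assumes c: "c \<in> fq_space R d"
  shows "card (fq_sphere R d (c, r)) = sphere_count R d r"
  unfolding sphere_count_def fq_sphere_eq[OF c]
proof (rule bij_betw_same_card[of "\<lambda>x. vec_sub R x c"], rule bij_betw_byWitness)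
  show "\<forall>x\<in>{x \<in> fq_space R d. sq_norm R (vec_sub R x c) = r}. vec_add R (vec_sub R x c) c = x"
    "\<forall>y\<in>{x \<in> fq_space R d. sq_norm R x = r}. vec_sub R (vec_add R y c) c = y"
    using c vec_add_sub_cancel vec_sub_add_cancel by auto
qed (use c vec_sub_add_cancel in auto)

lemma sum_carrier_minus_reindex:
  assumes "a \<in> carrier R"
  shows "(\<Sum>b\<in>carrier R. f (a \<ominus> b)) = (\<Sum>c\<in>carrier R. f c)"
proof -
  have "a \<ominus> (a \<ominus> b) = b" if "b \<in> carrier R" for b
    using that assms by algebra
  then show ?thesis
    using assms by (intro sum.reindex_bij_witness[of _ "\<lambda>c. a \<ominus> c" "\<lambda>b. a \<ominus> b"]) auto
qed

context
  assumes finite_carrier: "finite (carrier R)"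
begin

lemma sum_sphere_count: "(\<Sum>a\<in>carrier R. sphere_count R n a) = card (carrier R) ^ n"
  unfolding sphere_count_def
  by (subst sum_card_fibres) (auto simp: finite_carrier card_fq_space)

lemma sphere_count_Suc:
  assumes a: "a \<in> carrier R"
  shows "sphere_count R (Suc n) a = (\<Sum>u\<in>carrier R. sphere_count R n (a \<ominus> u \<otimes> u))"
proof -
  let ?fibre = "\<lambda>u. {y \<in> fq_space R n. sq_norm R y = a \<ominus> u \<otimes> u}"
  have "{x \<in> fq_space R (Suc n). sq_norm R x = a} = (\<Union>u\<in>carrier R. (#) u ` ?fibre u)"
  proof (intro equalityI subsetI)
    fix x assume "x \<in> {x \<in> fq_space R (Suc n). sq_norm R x = a}"
    then obtain u y where "x = u # y" "u \<in> carrier R" "y \<in> fq_space R n" "u \<otimes> u \<oplus> sq_norm R y = a"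
      by (auto elim: fq_space_SucE)
    moreover have "sq_norm R y = a \<ominus> u \<otimes> u"
      using calculation dot_closed[of y n y] by (simp flip: calculation(4)) algebra
    ultimately show "x \<in> (\<Union>u\<in>carrier R. (#) u ` ?fibre u)"
      by auto
  next
    fix x assume "x \<in> (\<Union>u\<in>carrier R. (#) u ` ?fibre u)"
    then obtain u y where "x = u # y" "u \<in> carrier R" "y \<in> ?fibre u"
      by auto
    moreover have "u \<otimes> u \<oplus> (a \<ominus> u \<otimes> u) = a"
      using calculation(2) a by algebra
    ultimately show "x \<in> {x \<in> fq_space R (Suc n). sq_norm R x = a}"
      by auto
  qed
  then have "sphere_count R (Suc n) a = card (\<Union>u\<in>carrier R. (#) u ` ?fibre u)"
    unfolding sphere_count_def by simp
  also have "\<dots> = (\<Sum>u\<in>carrier R. card ((#) u ` ?fibre u))"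
    by (rule card_UN_disjoint) (auto simp: finite_carrier)
  also have "\<dots> = (\<Sum>u\<in>carrier R. sphere_count R n (a \<ominus> u \<otimes> u))"
    unfolding sphere_count_def by (simp add: card_image)
  finally show ?thesis .
qed

lemma sum_section_count_radius:
  assumes v: "v \<in> fq_space R n"
  shows "(\<Sum>r\<in>carrier R. section_count R n v r t) = card {y \<in> fq_space R n. dot R y v = t}"
proof -
  have "(\<Sum>r\<in>carrier R. section_count R n v r t)
      = (\<Sum>r\<in>carrier R. card {y \<in> {y \<in> fq_space R n. dot R y v = t}. sq_norm R y = r})"
    unfolding section_count_def by (intro sum.cong refl, rule arg_cong[where f = card]) auto
  also have "\<dots> = card {y \<in> fq_space R n. dot R y v = t}"
    using v by (intro sum_card_fibres) (auto simp: finite_carrier)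
  finally show ?thesis .
qed

lemma sum_section_count_level:
  assumes v: "v \<in> fq_space R n"
  shows "(\<Sum>t\<in>carrier R. section_count R n v r t) = sphere_count R n r"
proof -
  have "(\<Sum>t\<in>carrier R. section_count R n v r t)
      = (\<Sum>t\<in>carrier R. card {y \<in> {y \<in> fq_space R n. sq_norm R y = r}. dot R y v = t})"
    unfolding section_count_def by (intro sum.cong refl, rule arg_cong[where f = card]) auto
  also have "\<dots> = sphere_count R n r"
    unfolding sphere_count_def using v by (intro sum_card_fibres) (auto simp: finite_carrier)
  finally show ?thesis .
qed

lemma section_count_shift_le:
  assumes v: "v \<in> fq_space R n" and m: "m \<in> carrier R"
  shows "section_count R n v r t
    \<le> section_count R n v (r \<oplus> two \<otimes> m \<otimes> t \<oplus> m \<otimes> m \<otimes> sq_norm R v) (t \<oplus> m \<otimes> sq_norm R v)"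
  unfolding section_count_def
proof (rule card_inj_on_le)
  show "inj_on (\<lambda>y. vec_add R y (vec_smult R m v)) {y \<in> fq_space R n. sq_norm R y = r \<and> dot R y v = t}"
    using inj_on_vec_add_smult[OF v m] by (rule inj_on_subset) auto
qed (use v m sq_norm_add_smult dot_add_smult finite_carrier in auto)

lemma section_count_shift:
  assumes v: "v \<in> fq_space R n" and rt: "r \<in> carrier R" "t \<in> carrier R" and m: "m \<in> carrier R"
  shows "section_count R n v r t
    = section_count R n v (r \<oplus> two \<otimes> m \<otimes> t \<oplus> m \<otimes> m \<otimes> sq_norm R v) (t \<oplus> m \<otimes> sq_norm R v)"
proof -
  have l: "sq_norm R v \<in> carrier R"
    using v by blast
  let ?r = "r \<oplus> two \<otimes> m \<otimes> t \<oplus> m \<otimes> m \<otimes> sq_norm R v" and ?t = "t \<oplus> m \<otimes> sq_norm R v"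
  have "?r \<oplus> two \<otimes> (\<ominus> m) \<otimes> ?t \<oplus> (\<ominus> m) \<otimes> (\<ominus> m) \<otimes> sq_norm R v = r"
    "?t \<oplus> (\<ominus> m) \<otimes> sq_norm R v = t"
    using rt m l by algebra+
  then show ?thesis
    using section_count_shift_le[OF v m, of r t] section_count_shift_le[OF v, of "\<ominus> m" ?r ?t] m
    by simp
qed

end

end

context field
begin

lemma section_count_scale:
  assumes v: "v \<in> fq_space R n" and k: "k \<in> carrier R" "k \<noteq> \<zero>" and r: "r \<in> carrier R"
    and fin: "finite (carrier R)"
  shows "section_count R n v (k \<otimes> k \<otimes> r) \<zero> = section_count R n v r \<zero>"
proof -
  have le: "section_count R n v r \<zero> \<le> section_count R n v (k \<otimes> k \<otimes> r) \<zero>"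
    if k: "k \<in> carrier R" "k \<noteq> \<zero>" for k r
    unfolding section_count_def
  proof (rule card_inj_on_le)
    show "inj_on (vec_smult R k) {y \<in> fq_space R n. sq_norm R y = r \<and> dot R y v = \<zero>}"
      using inj_on_vec_smult[OF k] by (rule inj_on_subset) auto
  qed (use v k sq_norm_smult dot_smult fin in auto)
  have "inv k \<otimes> inv k \<otimes> (k \<otimes> k \<otimes> r) = r"
    using k r by (simp add: m_assoc[symmetric]) (simp add: m_assoc m_comm[of "inv k" k])
  then show ?thesis
    using le[OF k, of r] le[of "inv k" "k \<otimes> k \<otimes> r"] k by simp
qed

lemma card_hyperplane:
  assumes fin: "finite (carrier R)"
    and v: "v \<in> fq_space R n" "v \<noteq> replicate n \<zero>" and t: "t \<in> carrier R"
  shows "card (carrier R) * card {y \<in> fq_space R n. dot R y v = t} = card (carrier R) ^ n"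
proof -
  obtain w where w: "w \<in> fq_space R n" "dot R w v = \<one>"
    using exists_dot_eq_one[OF v] by blast
  have le: "card {y \<in> fq_space R n. dot R y v = s} \<le> card {y \<in> fq_space R n. dot R y v = s'}"
    if "s \<in> carrier R" "s' \<in> carrier R" for s s'
  proof (rule card_inj_on_le)
    show "inj_on (\<lambda>y. vec_add R y (vec_smult R (s' \<ominus> s) w)) {y \<in> fq_space R n. dot R y v = s}"
      using inj_on_vec_add_smult[OF w(1) minus_closed[OF that(2,1)]] by (rule inj_on_subset) auto
    have "s \<oplus> (s' \<ominus> s) \<otimes> \<one> = s'"
      using that by algebra
    then show "(\<lambda>y. vec_add R y (vec_smult R (s' \<ominus> s) w)) ` {y \<in> fq_space R n. dot R y v = s}
        \<subseteq> {y \<in> fq_space R n. dot R y v = s'}"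
      using w v that dot_add_smult by auto
  qed (use fin in auto)
  have "card (carrier R) ^ n = (\<Sum>s\<in>carrier R. card {y \<in> fq_space R n. dot R y v = s})"
    using v by (subst sum_card_fibres) (auto simp: fin card_fq_space)
  also have "\<dots> = (\<Sum>s\<in>carrier R. card {y \<in> fq_space R n. dot R y v = t})"
    using le t by (intro sum.cong refl antisym) auto
  finally show ?thesis
    by simp
qed

end

context odd_finite_field
begin

lemma sphere_count_0: "sphere_count R 0 c = (if c = \<zero> then 1 else 0)"
proof -
  have "{x \<in> fq_space R 0. sq_norm R x = c} = (if c = \<zero> then {[]} else {})"
    by auto
  then show ?thesis
    unfolding sphere_count_def by simp
qed

lemma sphere_count_1:
  assumes c: "c \<in> carrier R"
  shows "sphere_count R 1 c = card {u \<in> carrier R. u \<otimes> u = c}"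
proof -
  have "sphere_count R 1 c = (\<Sum>u\<in>carrier R. sphere_count R 0 (c \<ominus> u \<otimes> u))"
    using sphere_count_Suc[OF finite_carrier c, of 0] by simp
  also have "\<dots> = (\<Sum>u\<in>carrier R. if u \<otimes> u = c then 1 else 0)"
  proof (rule sum.cong[OF refl])
    fix u assume "u \<in> carrier R"
    then have "c \<ominus> u \<otimes> u = \<zero> \<longleftrightarrow> u \<otimes> u = c"
      using c r_right_minus_eq[of c "u \<otimes> u"] by auto
    then show "sphere_count R 0 (c \<ominus> u \<otimes> u) = (if u \<otimes> u = c then 1 else 0)"
      by (simp add: sphere_count_0)
  qed
  also have "\<dots> = card {u \<in> carrier R. u \<otimes> u = c}"
    using finite_carrier by (simp add: sum.inter_filter[symmetric])
  finally show ?thesis .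
qed

lemma sphere_count_1_zero: "sphere_count R 1 \<zero> = 1"
proof -
  have "{u \<in> carrier R. u \<otimes> u = \<zero>} = {\<zero>}"
    using integral_iff by auto
  then show ?thesis
    using sphere_count_1 by simp
qed

lemma sphere_count_1_square: "r \<in> carrier R \<Longrightarrow> r \<noteq> \<zero> \<Longrightarrow> sphere_count R 1 (r \<otimes> r) = 2"
  using sphere_count_1 card_square_roots by simp

lemma sphere_count_Suc_Suc_eq_sum:
  assumes a: "a \<in> carrier R"
  shows "sphere_count R (Suc (Suc n)) a
    = (\<Sum>b\<in>carrier R. two_square_reps b * sphere_count R n (a \<ominus> b))"
proof -
  let ?g = "\<lambda>(u, w). u \<otimes> u \<oplus> w \<otimes> w"
  let ?pairs = "carrier R \<times> carrier R"
  have "a \<ominus> u \<otimes> u \<ominus> w \<otimes> w = a \<ominus> (u \<otimes> u \<oplus> w \<otimes> w)"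
    if "u \<in> carrier R" "w \<in> carrier R" for u w
    using that a by algebra
  then have "sphere_count R (Suc (Suc n)) a
      = (\<Sum>u\<in>carrier R. \<Sum>w\<in>carrier R. sphere_count R n (a \<ominus> (u \<otimes> u \<oplus> w \<otimes> w)))"
    using a by (simp add: sphere_count_Suc[OF finite_carrier])
  also have "\<dots> = (\<Sum>p\<in>?pairs. sphere_count R n (a \<ominus> ?g p))"
    by (simp add: sum.cartesian_product case_prod_beta)
  also have "\<dots> = (\<Sum>b\<in>carrier R. \<Sum>p\<in>{p \<in> ?pairs. ?g p = b}. sphere_count R n (a \<ominus> ?g p))"
    using finite_carrier by (intro sum.group[symmetric]) auto
  also have "\<dots> = (\<Sum>b\<in>carrier R. card {p \<in> ?pairs. ?g p = b} * sphere_count R n (a \<ominus> b))"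
  proof (rule sum.cong[OF refl])
    fix b
    have "(\<Sum>p\<in>{p \<in> ?pairs. ?g p = b}. sphere_count R n (a \<ominus> ?g p))
        = (\<Sum>p\<in>{p \<in> ?pairs. ?g p = b}. sphere_count R n (a \<ominus> b))"
      by (rule sum.cong) auto
    then show "(\<Sum>p\<in>{p \<in> ?pairs. ?g p = b}. sphere_count R n (a \<ominus> ?g p))
        = card {p \<in> ?pairs. ?g p = b} * sphere_count R n (a \<ominus> b)"
      by simp
  qed
  also have "\<dots> = (\<Sum>b\<in>carrier R. two_square_reps b * sphere_count R n (a \<ominus> b))"
    unfolding two_square_reps_def
    by (intro sum.cong refl, rule arg_cong2[where f = "(*)"], rule arg_cong[where f = card]) auto
  finally show ?thesis .
qed

end

context finite_field_3_mod_4
begin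

lemma sphere_count_Suc_Suc:
  assumes a: "a \<in> carrier R"
  shows "int (sphere_count R (Suc (Suc n)) a) = (int q + 1) * int q ^ n - int q * sphere_count R n a"
proof -
  define F where "F b = int (sphere_count R n (a \<ominus> b))" for b
  have "int (sphere_count R (Suc (Suc n)) a) = (\<Sum>b\<in>carrier R. int (two_square_reps b) * F b)"
    unfolding sphere_count_Suc_Suc_eq_sum[OF a] F_def by simp
  also have "\<dots> = F \<zero> + (\<Sum>b\<in>carrier R - {\<zero>}. int (two_square_reps b) * F b)"
    by (subst sum.remove[OF finite_carrier zero_closed]) (simp add: two_square_reps_zero)
  also have "(\<Sum>b\<in>carrier R - {\<zero>}. int (two_square_reps b) * F b)
      = (int q + 1) * ((\<Sum>b\<in>carrier R. F b) - F \<zero>)"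
    using finite_carrier two_square_reps_nonzero
    by (simp add: sum_distrib_left[symmetric] sum_diff1)
  also have "(\<Sum>b\<in>carrier R. F b) = int q ^ n"
    unfolding F_def using sum_carrier_minus_reindex[OF a, of "\<lambda>c. int (sphere_count R n c)"]
      sum_sphere_count[OF finite_carrier, of n] by (metis of_nat_power of_nat_sum)
  also have "F \<zero> = sphere_count R n a"
    unfolding F_def using a by (simp add: a_minus_def)
  finally show ?thesis
    by (simp add: algebra_simps)
qed

lemma sphere_count_odd:
  assumes a: "a \<in> carrier R"
  shows "int (sphere_count R (2 * k + 1) a) = int q ^ (2 * k) + (- int q) ^ k * (int (sphere_count R 1 a) - 1)"
proof (induction k)
  case (Suc k)
  have "int (sphere_count R (2 * Suc k + 1) a)
      = (int q + 1) * int q ^ (2 * k + 1) - int q * sphere_count R (2 * k + 1) a"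
    using sphere_count_Suc_Suc[OF a, of "2 * k + 1"] by simp
  also have "\<dots> = int q ^ (2 * Suc k) + (- int q) ^ Suc k * (int (sphere_count R 1 a) - 1)"
    unfolding Suc.IH by (simp add: algebra_simps)
  finally show ?case .
qed simp

lemma sphere_count_radius_zero:
  assumes "d mod 4 = 3"
  shows "sphere_count R d \<zero> = q ^ (d - 1)"
proof -
  define k where "k = d div 2"
  have "d = 2 * k + 1"
    using assms unfolding k_def by presburger
  then have "int (sphere_count R d \<zero>) = int (q ^ (d - 1))"
    using sphere_count_odd[of \<zero> k] sphere_count_1_zero by simp
  then show ?thesis
    by (simp only: of_nat_eq_iff)
qed

lemma sphere_count_radius_square:
  assumes "d mod 4 = 3" and r: "r \<in> carrier R" "r \<noteq> \<zero>"
  shows "int (sphere_count R d (r \<otimes> r)) = int q ^ (d - 1) - int q ^ ((d - 1) div 2)"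
proof -
  define k where "k = d div 2"
  have "d = 2 * k + 1" "odd k"
    using assms(1) unfolding k_def by presburger+
  then show ?thesis
    using sphere_count_odd[of "r \<otimes> r" k] sphere_count_1_square[OF r] r by simp
qed

end

context odd_finite_field
begin

lemma section_count_isotropic:
  assumes v: "v \<in> fq_space R n" "v \<noteq> replicate n \<zero>" "sq_norm R v = \<zero>"
    and r: "r \<in> carrier R" and t: "t \<in> carrier R" "t \<noteq> \<zero>"
  shows "q * q * section_count R n v r t = q ^ n"
proof -
  have t2: "two \<otimes> t \<in> carrier R" "two \<otimes> t \<noteq> \<zero>"
    using t two_neq_zero integral_iff by auto
  have const: "section_count R n v r' t = section_count R n v r t" if r': "r' \<in> carrier R" for r'
  proof -
    let ?m = "(r' \<ominus> r) \<otimes> inv (two \<otimes> t)"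
    have m: "?m \<in> carrier R"
      using r r' t2 by simp
    have "r \<oplus> two \<otimes> ?m \<otimes> t = r \<oplus> (r' \<ominus> r) \<otimes> (inv (two \<otimes> t) \<otimes> (two \<otimes> t))"
      using r r' t field_inv_closed[OF t2] by algebra
    also have "\<dots> = r \<oplus> (r' \<ominus> r) \<otimes> \<one>"
      using t2 by simp
    also have "\<dots> = r'"
      using r r' by algebra
    finally show ?thesis
      using section_count_shift[OF finite_carrier v(1) r t(1) m] v(3) m t r' by simp
  qed
  have "q * card {y \<in> fq_space R n. dot R y v = t} = q ^ n"
    by (rule card_hyperplane[OF finite_carrier v(1,2) t(1)])
  moreover have "card {y \<in> fq_space R n. dot R y v = t} = q * section_count R n v r t"
    using sum_section_count_radius[OF finite_carrier v(1), of t] const by simp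
  ultimately show ?thesis
    by (simp add: mult.assoc)
qed

lemma section_count_isotropic_zero_level:
  assumes v: "v \<in> fq_space R n" "v \<noteq> replicate n \<zero>" "sq_norm R v = \<zero>" and r: "r \<in> carrier R"
  shows "int q * q * section_count R n v r \<zero> = int q * q * sphere_count R n r - (int q - 1) * q ^ n"
proof -
  have "sphere_count R n r = section_count R n v r \<zero> + (\<Sum>t\<in>carrier R - {\<zero>}. section_count R n v r t)"
    using sum_section_count_level[OF finite_carrier v(1), of r]
      sum.remove[OF finite_carrier zero_closed, of "section_count R n v r"] by simp
  then have "q * q * sphere_count R n r
      = q * q * section_count R n v r \<zero> + (\<Sum>t\<in>carrier R - {\<zero>}. q * q * section_count R n v r t)"
    by (simp add: algebra_simps sum_distrib_left)
  also have "(\<Sum>t\<in>carrier R - {\<zero>}. q * q * section_count R n v r t) = (q - 1) * q ^ n"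
    using section_count_isotropic[OF v r] finite_carrier by simp
  finally have "int (q * q * sphere_count R n r) = int (q * q * section_count R n v r \<zero> + (q - 1) * q ^ n)"
    by simp
  then show ?thesis
    using odd_pos[OF odd_card] by (simp add: of_nat_diff)
qed

lemma section_count_anisotropic_reduce:
  assumes v: "v \<in> fq_space R n" and l: "sq_norm R v \<noteq> \<zero>" and r: "r \<in> carrier R" and t: "t \<in> carrier R"
  shows "section_count R n v r t = section_count R n v (r \<ominus> t \<otimes> t \<otimes> inv (sq_norm R v)) \<zero>"
proof -
  let ?l = "sq_norm R v"
  let ?m = "\<ominus> t \<otimes> inv ?l"
  have lc: "?l \<in> carrier R"
    using v by blast
  then have il: "inv ?l \<in> carrier R" "inv ?l \<otimes> ?l = \<one>"
    using l by auto
  have m: "?m \<in> carrier R"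
    using t il by simp
  have "t \<oplus> ?m \<otimes> ?l = t \<ominus> t \<otimes> (inv ?l \<otimes> ?l)"
    using t il(1) lc by algebra
  also have "\<dots> = \<zero>"
    using t by (simp add: il(2) r_right_minus_eq)
  finally have level: "t \<oplus> ?m \<otimes> ?l = \<zero>" .
  have "r \<oplus> two \<otimes> ?m \<otimes> t \<oplus> ?m \<otimes> ?m \<otimes> ?l = r \<ominus> two \<otimes> t \<otimes> t \<otimes> inv ?l \<oplus> t \<otimes> t \<otimes> inv ?l \<otimes> (inv ?l \<otimes> ?l)"
    using r t il(1) lc by algebra
  also have "\<dots> = r \<ominus> two \<otimes> t \<otimes> t \<otimes> inv ?l \<oplus> t \<otimes> t \<otimes> inv ?l \<otimes> \<one>"
    by (simp only: il(2))
  also have "\<dots> = r \<ominus> t \<otimes> t \<otimes> inv ?l"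
    using r t il(1) by algebra
  finally show ?thesis
    using section_count_shift[OF finite_carrier v r t m] level by simp
qed

lemma section_count_same_square_class:
  assumes v: "v \<in> fq_space R n" and a: "a \<in> carrier R" "a \<noteq> \<zero>" and b: "b \<in> carrier R" "b \<noteq> \<zero>"
    and same_class: "a \<in> squares R \<longleftrightarrow> b \<in> squares R"
  shows "section_count R n v a \<zero> = section_count R n v b \<zero>"
proof -
  obtain k where "k \<in> carrier R" "k \<noteq> \<zero>" "b = k \<otimes> k \<otimes> a"
    using same_square_class[OF a b same_class] .
  then show ?thesis
    using section_count_scale[OF v _ _ a(1) finite_carrier] by simp
qed

lemma sphere_count_eq_sum_section_count:
  assumes v: "v \<in> fq_space R n" and l: "sq_norm R v \<noteq> \<zero>" and r: "r \<in> carrier R"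
  shows "sphere_count R n r = (\<Sum>t\<in>carrier R. section_count R n v (r \<ominus> t \<otimes> t \<otimes> inv (sq_norm R v)) \<zero>)"
  using sum_section_count_level[OF finite_carrier v, of r] section_count_anisotropic_reduce[OF v l r]
  by simp


lemma sphere_count_radius_zero_eq_section_counts:
  assumes v: "v \<in> fq_space R n" and l: "sq_norm R v \<noteq> \<zero>"
  shows "sphere_count R n \<zero>
    = section_count R n v \<zero> \<zero> + (q - 1) * section_count R n v (\<ominus> (inv (sq_norm R v))) \<zero>"
proof -
  let ?K = "\<lambda>a. section_count R n v a \<zero>"
  let ?l = "sq_norm R v"
  let ?c = "\<ominus> (inv ?l)"
  have lc: "?l \<in> carrier R"
    using v by blast
  have level: "?K (\<zero> \<ominus> t \<otimes> t \<otimes> inv ?l) = ?K ?c" if t: "t \<in> carrier R - {\<zero>}" for t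
  proof -
    have "\<zero> \<ominus> t \<otimes> t \<otimes> inv ?l = t \<otimes> t \<otimes> ?c"
      using DiffD1[OF t] lc field_inv_closed[OF lc l] by algebra
    then show ?thesis
      using section_count_scale[OF v _ _ _ finite_carrier, of t ?c] t lc l by simp
  qed
  have "sphere_count R n \<zero> = (\<Sum>t\<in>carrier R. ?K (\<zero> \<ominus> t \<otimes> t \<otimes> inv ?l))"
    by (rule sphere_count_eq_sum_section_count[OF v l zero_closed])
  also have "\<dots> = ?K (\<zero> \<ominus> \<zero> \<otimes> \<zero> \<otimes> inv ?l) + (\<Sum>t\<in>carrier R - {\<zero>}. ?K (\<zero> \<ominus> t \<otimes> t \<otimes> inv ?l))"
    by (rule sum.remove[OF finite_carrier zero_closed])
  also have "(\<Sum>t\<in>carrier R - {\<zero>}. ?K (\<zero> \<ominus> t \<otimes> t \<otimes> inv ?l)) = (\<Sum>t\<in>carrier R - {\<zero>}. ?K ?c)"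
    by (rule sum.cong[OF refl level])
  also have "\<zero> \<ominus> \<zero> \<otimes> \<zero> \<otimes> inv ?l = \<zero>"
    using lc l by (simp add: a_minus_def)
  finally show ?thesis
    using finite_carrier by simp
qed

end

context finite_field_3_mod_4
begin

lemma card_nonzero_squares_pos: "card (squares R - {\<zero>}) > 0"
  using card_nonzero_squares card_gt_2 by linarith

lemma section_count_nonzero_square_class:
  assumes v: "v \<in> fq_space R n" and a: "a \<in> carrier R" "a \<noteq> \<zero>"
  shows "section_count R n v a \<zero>
    = (if a \<in> squares R then section_count R n v \<one> \<zero> else section_count R n v (\<ominus> \<one>) \<zero>)"
  using section_count_same_square_class[OF v a, of \<one>] section_count_same_square_class[OF v a, of "\<ominus> \<one>"]
    minus_one_not_square by auto

lemma sum_section_count_zero_level: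
  assumes v: "v \<in> fq_space R n" "v \<noteq> replicate n \<zero>"
  shows "q * (section_count R n v \<zero> \<zero> + card (squares R - {\<zero>})
      * (section_count R n v \<one> \<zero> + section_count R n v (\<ominus> \<one>) \<zero>)) = q ^ n"
proof -
  let ?K = "\<lambda>a. section_count R n v a \<zero>"
  have fin: "finite (squares R - {\<zero>})" "finite (carrier R - squares R)"
    using finite_carrier squares_subset_carrier finite_subset by blast+
  have "carrier R - {\<zero>} = (squares R - {\<zero>}) \<union> (carrier R - squares R)"
    using squares_subset_carrier by auto
  then have "(\<Sum>a\<in>carrier R. ?K a)
      = ?K \<zero> + ((\<Sum>a\<in>squares R - {\<zero>}. ?K a) + (\<Sum>a\<in>carrier R - squares R. ?K a))"
    using sum.remove[OF finite_carrier zero_closed, of ?K] sum.union_disjoint[OF fin, of ?K] by auto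
  also have "\<dots> = ?K \<zero> + (card (squares R - {\<zero>}) * ?K \<one> + card (carrier R - squares R) * ?K (\<ominus> \<one>))"
  proof -
    have sq: "?K a = ?K \<one>" if "a \<in> squares R - {\<zero>}" for a
      using section_count_nonzero_square_class[OF v(1), of a] that squares_subset_carrier by auto
    have nonsq: "?K a = ?K (\<ominus> \<one>)" if a: "a \<in> carrier R - squares R" for a
    proof -
      have "a \<noteq> \<zero>"
        using a by auto
      then show ?thesis
        using section_count_nonzero_square_class[OF v(1), of a] a by simp
    qed
    have "(\<Sum>a\<in>squares R - {\<zero>}. ?K a) = (\<Sum>a\<in>squares R - {\<zero>}. ?K \<one>)"
      by (rule sum.cong[OF refl sq])
    moreover have "(\<Sum>a\<in>carrier R - squares R. ?K a) = (\<Sum>a\<in>carrier R - squares R. ?K (\<ominus> \<one>))"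
      by (rule sum.cong[OF refl nonsq])
    ultimately show ?thesis
      by simp
  qed
  finally have "(\<Sum>a\<in>carrier R. ?K a)
      = ?K \<zero> + card (squares R - {\<zero>}) * (?K \<one> + ?K (\<ominus> \<one>))"
    by (simp add: card_nonsquares algebra_simps)
  then show ?thesis
    using card_hyperplane[OF finite_carrier v zero_closed] sum_section_count_radius[OF finite_carrier v(1)]
    by simp
qed

text \<open>The sphere of radius zero and the hyperplane \<open>v\<^sup>\<bottom>\<close> both have \<open>q\<^bsup>n-1\<^esup>\<close> points. Comparing
  their decompositions into sections shows that the section count at \<open>-1 / |v|\<^sup>2\<close>, which is one of
  the counts at \<open>1\<close> and \<open>-1\<close>, is also their average.\<close>

lemma section_count_one_eq_minus_one:
  assumes n: "n mod 4 = 3" and v: "v \<in> fq_space R n" and l: "sq_norm R v \<noteq> \<zero>"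
  shows "section_count R n v \<one> \<zero> = section_count R n v (\<ominus> \<one>) \<zero>"
proof -
  let ?K = "\<lambda>a. section_count R n v a \<zero>"
  let ?h = "card (squares R - {\<zero>})" and ?c = "\<ominus> (inv (sq_norm R v))"
  have "sq_norm R v \<in> carrier R"
    using v by blast
  then have c: "?c \<in> carrier R" "?c \<noteq> \<zero>"
    using l by (simp_all add: add.inv_eq_1_iff)
  have "v \<noteq> replicate n \<zero>"
    using l v by (auto simp: dot_replicate_zero)
  then have "q * (?K \<zero> + ?h * (?K \<one> + ?K (\<ominus> \<one>))) = q * q ^ (n - 1)"
    using sum_section_count_zero_level[OF v] n by (simp flip: power_Suc)
  then have "2 * ?h * ?K ?c = ?h * (?K \<one> + ?K (\<ominus> \<one>))"
    using sphere_count_radius_zero_eq_section_counts[OF v l] sphere_count_radius_zero[OF n]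
      card_nonzero_squares card_gt_2 by simp
  moreover have "?K ?c = ?K \<one> \<or> ?K ?c = ?K (\<ominus> \<one>)"
    using section_count_nonzero_square_class[OF v c] by auto
  ultimately show ?thesis
    using card_nonzero_squares_pos by auto
qed

lemma section_count_nonzero_level:
  assumes n: "n mod 4 = 3" and v: "v \<in> fq_space R n" and l: "sq_norm R v \<noteq> \<zero>"
    and b: "b \<in> carrier R" "b \<noteq> \<zero>"
  shows "section_count R n v b \<zero> = section_count R n v \<one> \<zero>"
  using section_count_nonzero_square_class[OF v b] section_count_one_eq_minus_one[OF n v l] by simp

lemma section_count_zero_level_eq:
  assumes n: "n mod 4 = 3" and v: "v \<in> fq_space R n" and l: "sq_norm R v \<noteq> \<zero>"
  shows "section_count R n v \<zero> \<zero> + (q - 1) * section_count R n v \<one> \<zero> = q ^ (n - 1)"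
proof -
  let ?K = "\<lambda>a. section_count R n v a \<zero>"
  define h where "h = card (squares R - {\<zero>})"
  have "v \<noteq> replicate n \<zero>"
    using l v by (auto simp: dot_replicate_zero)
  then have "q * (?K \<zero> + h * (?K \<one> + ?K \<one>)) = q ^ n"
    using sum_section_count_zero_level[OF v] section_count_one_eq_minus_one[OF n v l] h_def by simp
  moreover have "h * (?K \<one> + ?K \<one>) = (q - 1) * ?K \<one>"
  proof -
    have "h * (?K \<one> + ?K \<one>) = (2 * h) * ?K \<one>"
      by (simp add: algebra_simps)
    moreover have "2 * h = q - 1"
      using card_nonzero_squares h_def by simp
    ultimately show ?thesis
      by (simp only:)
  qed
  moreover have "q ^ n = q * q ^ (n - 1)"
    using n by (simp flip: power_Suc)
  ultimately show ?thesis
    using card_gt_2 by simp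
qed

lemma section_count_nonsquare_norm:
  assumes n: "n mod 4 = 3" and v: "v \<in> fq_space R n" and l: "sq_norm R v \<notin> squares R"
  shows "int q * section_count R n v \<one> \<zero> = int q ^ (n - 1) - int q ^ ((n - 1) div 2)"
proof -
  let ?l = "sq_norm R v"
  have lc: "?l \<in> carrier R" and l0: "?l \<noteq> \<zero>"
    using v l by auto
  have "section_count R n v (\<one> \<ominus> t \<otimes> t \<otimes> inv ?l) \<zero> = section_count R n v \<one> \<zero>"
    if t: "t \<in> carrier R" for t
  proof (rule section_count_nonzero_level[OF n v l0])
    show "\<one> \<ominus> t \<otimes> t \<otimes> inv ?l \<in> carrier R"
      using t lc l0 by simp
    show "\<one> \<ominus> t \<otimes> t \<otimes> inv ?l \<noteq> \<zero>"
    proof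
      assume "\<one> \<ominus> t \<otimes> t \<otimes> inv ?l = \<zero>"
      then have "t \<otimes> t \<otimes> inv ?l = \<one>"
        using r_right_minus_eq[of \<one> "t \<otimes> t \<otimes> inv ?l"] t lc l0 by simp
      then have "t \<otimes> t = ?l"
        using mult_inv_eq_iff[OF lc l0] t lc by simp
      then show False
        using l square_in_squares[OF t] by simp
    qed
  qed
  then have "sphere_count R n \<one> = q * section_count R n v \<one> \<zero>"
    using sphere_count_eq_sum_section_count[OF v l0 one_closed] by simp
  then show ?thesis
    using sphere_count_radius_square[OF n one_closed] by simp
qed

lemma sphere_count_norm_eq_section_counts:
  assumes n: "n mod 4 = 3" and v: "v \<in> fq_space R n" and l0: "sq_norm R v \<noteq> \<zero>"
  shows "int (sphere_count R n (sq_norm R v))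
    = 2 * int (section_count R n v \<zero> \<zero>) + (int q - 2) * int (section_count R n v \<one> \<zero>)"
proof -
  let ?l = "sq_norm R v" and ?K = "\<lambda>a. int (section_count R n v a \<zero>)"
  have lc: "?l \<in> carrier R"
    using v by blast
  have level: "?K (?l \<ominus> t \<otimes> t \<otimes> inv ?l) = (if t \<in> {?l, \<ominus> ?l} then ?K \<zero> else ?K \<one>)"
    if t: "t \<in> carrier R" for t
  proof -
    have "?l \<ominus> t \<otimes> t \<otimes> inv ?l = \<zero> \<longleftrightarrow> t \<otimes> t \<otimes> inv ?l = ?l"
      using r_right_minus_eq[of ?l "t \<otimes> t \<otimes> inv ?l"] t lc l0 by auto
    also have "\<dots> \<longleftrightarrow> t \<in> {?l, \<ominus> ?l}"
      using mult_inv_eq_iff[OF lc l0] square_eq_square_iff[OF lc t] t lc by simp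
    finally have iff: "?l \<ominus> t \<otimes> t \<otimes> inv ?l = \<zero> \<longleftrightarrow> t \<in> {?l, \<ominus> ?l}" .
    show ?thesis
    proof (cases "t \<in> {?l, \<ominus> ?l}")
      case True
      then show ?thesis
        using iff by simp
    next
      case False
      then show ?thesis
        using iff section_count_nonzero_level[OF n v l0, of "?l \<ominus> t \<otimes> t \<otimes> inv ?l"] t lc l0 by simp
    qed
  qed
  have "int (sphere_count R n ?l) = (\<Sum>t\<in>carrier R. if t \<in> {?l, \<ominus> ?l} then ?K \<zero> else ?K \<one>)"
    unfolding sphere_count_eq_sum_section_count[OF v l0 lc] of_nat_sum using level by simp
  also have "\<dots> = 2 * ?K \<zero> + (int q - 2) * ?K \<one>"
    using sum_if_mem_const[OF finite_carrier, of "{?l, \<ominus> ?l}" "?K \<zero>" "?K \<one>"] lc l0 card_gt_2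
      neg_eq_self_iff[OF lc] by (simp add: of_nat_diff)
  finally show ?thesis .
qed

lemma section_count_square_norm:
  assumes n: "n mod 4 = 3" and v: "v \<in> fq_space R n" and l0: "sq_norm R v \<noteq> \<zero>"
    and l: "sq_norm R v \<in> squares R"
  shows "int q * section_count R n v \<one> \<zero> = int q ^ (n - 1) + int q ^ ((n - 1) div 2)"
    and "int q * section_count R n v \<zero> \<zero> \<le> int q ^ (n - 1) + int q ^ ((n - 1) div 2)"
proof -
  let ?K = "\<lambda>a. int (section_count R n v a \<zero>)"
  define Q and M where "Q = int q ^ (n - 1)" and "M = int q ^ ((n - 1) div 2)"
  obtain r where r: "r \<in> carrier R" "sq_norm R v = r \<otimes> r"
    using l by (rule squaresE)
  then have "r \<noteq> \<zero>"
    using l0 by auto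
  then have norm_level: "2 * ?K \<zero> + (int q - 2) * ?K \<one> = Q - M"
    using sphere_count_norm_eq_section_counts[OF n v l0] sphere_count_radius_square[OF n r(1)] r(2)
    unfolding Q_def M_def by simp
  have "int (section_count R n v \<zero> \<zero> + (q - 1) * section_count R n v \<one> \<zero>) = int (q ^ (n - 1))"
    using section_count_zero_level_eq[OF n v l0] by (rule arg_cong)
  then have zero_level: "?K \<zero> + (int q - 1) * ?K \<one> = Q"
    unfolding Q_def using card_gt_2 by (simp add: of_nat_diff)
  have one: "int q * ?K \<one> = Q + M"
    using norm_level zero_level by (simp add: algebra_simps)
  then show "int q * ?K \<one> = int q ^ (n - 1) + int q ^ ((n - 1) div 2)"
    unfolding Q_def M_def .
  have "int q * ?K \<zero> = int q * (?K \<zero> + (int q - 1) * ?K \<one>) - (int q - 1) * (int q * ?K \<one>)"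
    by (simp add: algebra_simps)
  also have "\<dots> = Q + M - int q * M"
    unfolding zero_level one by (simp add: algebra_simps)
  finally show "int q * ?K \<zero> \<le> int q ^ (n - 1) + int q ^ ((n - 1) div 2)"
    unfolding Q_def[symmetric] M_def[symmetric] by (simp add: M_def)
qed

text \<open>The hypothesis \<open>a \<noteq> \<zero> \<or> |v|\<^sup>2 \<in> squares\<close> excludes the one large section: for a nonsquare
  \<open>|v|\<^sup>2\<close>, the section at level zero has about \<open>q\<^bsup>(n-1)/2\<^esup>\<close> too many points.\<close>

lemma section_count_anisotropic_bound:
  assumes n: "n mod 4 = 3" and v: "v \<in> fq_space R n" and l0: "sq_norm R v \<noteq> \<zero>"
    and a: "a \<in> carrier R" and nondegenerate: "a \<noteq> \<zero> \<or> sq_norm R v \<in> squares R"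
  shows "int q * section_count R n v a \<zero> \<le> int q ^ (n - 1) + int q ^ ((n - 1) div 2)"
proof (cases "sq_norm R v \<in> squares R")
  case True
  then show ?thesis
    using section_count_square_norm[OF n v l0 True] section_count_nonzero_level[OF n v l0 a]
    by (cases "a = \<zero>") auto
next
  case False
  then show ?thesis
    using section_count_nonsquare_norm[OF n v False] section_count_nonzero_level[OF n v l0 a]
      nondegenerate by simp
qed

end

section \<open>Intersections of two spheres\<close>

text \<open>Subtracting the equations of two spheres with centres \<open>c\<close>, \<open>c'\<close> leaves the linear equation
  \<open>2 (x - c) \<cdot> (c' - c) = r - r' + |c' - c|\<^sup>2\<close>.\<close>

lemma (in odd_finite_field) card_sphere_inter_le_section_count:
  assumes c: "c \<in> fq_space R d" and c': "c' \<in> fq_space R d" and r: "r \<in> carrier R" "r' \<in> carrier R"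
  defines "v \<equiv> vec_sub R c' c"
  shows "card (fq_sphere R d (c, r) \<inter> fq_sphere R d (c', r'))
    \<le> section_count R d v r ((r \<ominus> r' \<oplus> sq_norm R v) \<otimes> inv two)"
  unfolding section_count_def
proof (rule card_inj_on_le[OF _ image_subsetI])
  show "inj_on (\<lambda>x. vec_sub R x c) (fq_sphere R d (c, r) \<inter> fq_sphere R d (c', r'))"
    using inj_on_vec_sub[OF c] by (rule inj_on_subset) (auto simp: fq_sphere_def)
  have v: "v \<in> fq_space R d"
    unfolding v_def using c c' by blast
  fix x assume "x \<in> fq_sphere R d (c, r) \<inter> fq_sphere R d (c', r')"
  then have x: "x \<in> fq_space R d" "sq_norm R (vec_sub R x c) = r" "sq_norm R (vec_sub R x c') = r'"
    using fq_sphere_eq[OF c] fq_sphere_eq[OF c'] by auto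
  let ?y = "vec_sub R x c"
  have y: "?y \<in> fq_space R d" "dot R ?y v \<in> carrier R" "sq_norm R v \<in> carrier R"
    using x c v by auto
  have "r' = r \<ominus> two \<otimes> dot R ?y v \<oplus> sq_norm R v"
    using sq_norm_sub[OF y(1) v] x vec_sub_sub_sub[OF x(1) c c'] unfolding v_def by simp
  then have "r \<ominus> r' \<oplus> sq_norm R v = dot R ?y v \<otimes> two"
    using r y by (simp only:) algebra
  then have "dot R ?y v = (r \<ominus> r' \<oplus> sq_norm R v) \<otimes> inv two"
    using mult_inv_eq_iff[OF _ two_neq_zero, of "r \<ominus> r' \<oplus> sq_norm R v" "dot R ?y v"] r y by simp
  then show "?y \<in> {y \<in> fq_space R d. sq_norm R y = r \<and> dot R y v = (r \<ominus> r' \<oplus> sq_norm R v) \<otimes> inv two}"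
    using x y by simp
qed (simp add: finite_carrier)

text \<open>A degenerate level would need \<open>t\<^sup>2 = \<rho>\<^sup>2 l\<close>; for a nonsquare \<open>l\<close> this forces
  \<open>t = \<rho> = 0\<close>, and then \<open>l = \<rho>'\<^sup>2\<close> is a square after all.\<close>

lemma (in odd_finite_field) sphere_pair_level_nonzero:
  assumes \<rho>: "\<rho> \<in> carrier R" "\<rho>' \<in> carrier R" and l: "l \<in> carrier R" "l \<noteq> \<zero>" "l \<notin> squares R"
    and t: "t = (\<rho> \<otimes> \<rho> \<ominus> \<rho>' \<otimes> \<rho>' \<oplus> l) \<otimes> inv two"
  shows "\<rho> \<otimes> \<rho> \<ominus> t \<otimes> t \<otimes> inv l \<noteq> \<zero>"
proof
  let ?r = "\<rho> \<otimes> \<rho>" and ?r' = "\<rho>' \<otimes> \<rho>'"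
  have tc: "t \<in> carrier R"
    unfolding t using \<rho> l two_neq_zero by auto
  assume "?r \<ominus> t \<otimes> t \<otimes> inv l = \<zero>"
  then have tt: "t \<otimes> t = ?r \<otimes> l"
    using r_right_minus_eq[of ?r "t \<otimes> t \<otimes> inv l"] mult_inv_eq_iff[OF l(1,2), of "t \<otimes> t" ?r] \<rho> tc l
    by auto
  have "\<rho> = \<zero>"
  proof (rule ccontr)
    assume "\<rho> \<noteq> \<zero>"
    then have "?r \<in> squares R" "?r \<noteq> \<zero>"
      using \<rho> integral_iff by auto
    then have "l \<in> squares R"
      using mult_nonzero_square_in_squares_iff[OF _ _ l(1)] tt square_in_squares[OF tc] by simp
    then show False
      using l by simp
  qed
  then have "t = \<zero>"
    using tt tc l integral_iff by auto
  then have "\<zero> \<ominus> ?r' \<oplus> l = \<zero>"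
    using \<rho> l two_neq_zero integral_iff[of "\<zero> \<ominus> ?r' \<oplus> l" "inv two"] \<open>\<rho> = \<zero>\<close> unfolding t by auto
  moreover have "l \<ominus> ?r' = \<zero> \<ominus> ?r' \<oplus> l"
    using \<rho> l by algebra
  ultimately have "l = ?r'"
    using r_right_minus_eq[of l ?r'] \<rho> l by simp
  then show False
    using l \<rho> by simp
qed

context finite_field_3_mod_4
begin

lemma sphere_count_radius_square_le:
  assumes "d mod 4 = 3" "\<rho> \<in> carrier R"
  shows "int (sphere_count R d (\<rho> \<otimes> \<rho>)) \<le> int q ^ (d - 1)"
  using assms sphere_count_radius_zero sphere_count_radius_square by (cases "\<rho> = \<zero>") auto

lemma section_count_isotropic_bound:
  assumes d: "d mod 4 = 3" and v: "v \<in> fq_space R d" "v \<noteq> replicate d \<zero>" "sq_norm R v = \<zero>"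
    and \<rho>: "\<rho> \<in> carrier R" and t: "t \<in> carrier R"
  shows "int q * section_count R d v (\<rho> \<otimes> \<rho>) t \<le> int q ^ (d - 1)"
proof -
  have "d = Suc (d - 1)"
    using d by presburger
  then have qd: "int q ^ d = int q * int q ^ (d - 1)"
    by (metis power_Suc)
  have "int q * (int q * section_count R d v (\<rho> \<otimes> \<rho>) t) \<le> int q * int q ^ (d - 1)"
  proof (cases "t = \<zero>")
    case True
    have "int q * (int q * section_count R d v (\<rho> \<otimes> \<rho>) t)
        = int q * q * sphere_count R d (\<rho> \<otimes> \<rho>) - (int q - 1) * q ^ d"
      using section_count_isotropic_zero_level[OF v] \<rho> True by (simp add: mult.assoc)
    also have "\<dots> \<le> int q * q * q ^ (d - 1) - (int q - 1) * q ^ d"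
      using mult_left_mono[OF sphere_count_radius_square_le[OF d \<rho>], of "int q * q"] by simp
    also have "\<dots> = int q * int q ^ (d - 1)"
      by (simp add: qd algebra_simps)
    finally show ?thesis .
  next
    case False
    then have "q * (q * section_count R d v (\<rho> \<otimes> \<rho>) t) = q ^ d"
      using section_count_isotropic[OF v _ t] \<rho> by (simp add: mult.assoc)
    then have "int q * (int q * section_count R d v (\<rho> \<otimes> \<rho>) t) = int q ^ d"
      by (metis of_nat_mult of_nat_power)
    then show ?thesis
      using qd by simp
  qed
  then show ?thesis
    using card_gt_2 by simp
qed

lemma section_count_sphere_pair_bound:
  assumes d: "d mod 4 = 3" and v: "v \<in> fq_space R d" "v \<noteq> replicate d \<zero>"
    and \<rho>: "\<rho> \<in> carrier R" "\<rho>' \<in> carrier R"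
  defines "t \<equiv> (\<rho> \<otimes> \<rho> \<ominus> \<rho>' \<otimes> \<rho>' \<oplus> sq_norm R v) \<otimes> inv two"
  shows "int q * section_count R d v (\<rho> \<otimes> \<rho>) t \<le> int q ^ (d - 1) + int q ^ ((d - 1) div 2)"
proof -
  have tc: "t \<in> carrier R"
    unfolding t_def using dot_closed[OF v(1) v(1)] \<rho> two_neq_zero by simp
  show ?thesis
  proof (cases "sq_norm R v = \<zero>")
    case True
    then have "int q * section_count R d v (\<rho> \<otimes> \<rho>) t \<le> int q ^ (d - 1)"
      using section_count_isotropic_bound[OF d v True \<rho>(1) tc] by simp
    then show ?thesis
      by (simp add: add_increasing2)
  next
    case False
    let ?a = "\<rho> \<otimes> \<rho> \<ominus> t \<otimes> t \<otimes> inv (sq_norm R v)"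
    have "?a \<noteq> \<zero> \<or> sq_norm R v \<in> squares R"
      using sphere_pair_level_nonzero[OF \<rho> dot_closed[OF v(1) v(1)] False _ meta_eq_to_obj_eq[OF t_def]]
      by blast
    moreover have "?a \<in> carrier R"
      using dot_closed[OF v(1) v(1)] \<rho> tc False by simp
    ultimately have "int q * section_count R d v ?a \<zero> \<le> int q ^ (d - 1) + int q ^ ((d - 1) div 2)"
      using section_count_anisotropic_bound[OF d v(1) False] by blast
    then show ?thesis
      using section_count_anisotropic_reduce[OF v(1) False _ tc] \<rho> by simp
  qed
qed

lemma card_sphere_inter_bound:
  assumes d: "d mod 4 = 3" and s: "s \<in> square_radius_spheres R d" and s': "s' \<in> square_radius_spheres R d"
    and ne: "s \<noteq> s'"
  shows "int q * card (fq_sphere R d s \<inter> fq_sphere R d s') \<le> int q ^ (d - 1) + int q ^ ((d - 1) div 2)"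
proof -
  obtain c \<rho> where S: "s = (c, \<rho> \<otimes> \<rho>)" "c \<in> fq_space R d" "\<rho> \<in> carrier R"
    using s unfolding square_radius_spheres_def by auto
  obtain c' \<rho>' where S': "s' = (c', \<rho>' \<otimes> \<rho>')" "c' \<in> fq_space R d" "\<rho>' \<in> carrier R"
    using s' unfolding square_radius_spheres_def by auto
  show ?thesis
  proof (cases "c = c'")
    case True
    then have "fq_sphere R d s \<inter> fq_sphere R d s' = {}"
      using ne S S' fq_sphere_eq[OF S(2)] by auto
    then show ?thesis
      by simp
  next
    case False
    let ?v = "vec_sub R c' c"
    have v: "?v \<in> fq_space R d" "?v \<noteq> replicate d \<zero>"
      using S S' False vec_add_sub_cancel[OF S'(2) S(2)] vec_add_replicate_zero[OF S(2)] by auto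
    have "card (fq_sphere R d s \<inter> fq_sphere R d s')
        \<le> section_count R d ?v (\<rho> \<otimes> \<rho>) ((\<rho> \<otimes> \<rho> \<ominus> \<rho>' \<otimes> \<rho>' \<oplus> sq_norm R ?v) \<otimes> inv two)"
      using card_sphere_inter_le_section_count[OF S(2) S'(2)] S S' by simp
    then show ?thesis
      using section_count_sphere_pair_bound[OF d v S(3) S'(3)]
      by (meson mult_left_mono of_nat_0_le_iff of_nat_mono order.trans)
  qed
qed

end

section \<open>A second-moment bound for incidences\<close>

lemma sum_deviation_squared_le:
  fixes f :: "'a \<Rightarrow> real" and \<mu> :: real
  assumes "finite U" "P \<subseteq> U"
  shows "((\<Sum>p\<in>P. f p) - card P * \<mu>)\<^sup>2 \<le> card P * (\<Sum>x\<in>U. (f x - \<mu>)\<^sup>2)"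
proof -
  have "((\<Sum>p\<in>P. f p) - card P * \<mu>)\<^sup>2 = (\<Sum>p\<in>P. f p - \<mu>)\<^sup>2"
    by (simp add: sum_subtractf)
  also have "\<dots> \<le> (\<Sum>p\<in>P. (f p - \<mu>)\<^sup>2) * card P"
    by (rule sum_squared_le_sum_of_squares)
  also have "\<dots> \<le> (\<Sum>x\<in>U. (f x - \<mu>)\<^sup>2) * card P"
    using assms by (intro mult_right_mono sum_mono2) auto
  finally show ?thesis
    by (simp add: mult.commute)
qed

context
  fixes U :: "'p set" and S :: "'s set" and B :: "'s \<Rightarrow> 'p set"
  assumes finite: "finite U" "finite S" and subset: "\<And>s. s \<in> S \<Longrightarrow> B s \<subseteq> U"
begin

definition cover_count :: "'p \<Rightarrow> real" where
  "cover_count x = card {s \<in> S. x \<in> B s}"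

lemma cover_count_eq_sum: "cover_count x = (\<Sum>s\<in>S. of_bool (x \<in> B s))"
proof -
  have "{s \<in> S. x \<in> B s} = S \<inter> {s. x \<in> B s}"
    by auto
  then show ?thesis
    unfolding cover_count_def using finite(2) by simp
qed

lemma sum_of_bool_mem_subset: "A \<subseteq> U \<Longrightarrow> (\<Sum>x\<in>U. of_bool (x \<in> A)) = real (card A)"
  using finite(1) by (simp add: Int_absorb1 Collect_mem_eq)

lemma sum_cover_count: "(\<Sum>x\<in>U. cover_count x) = (\<Sum>s\<in>S. real (card (B s)))"
proof -
  have "(\<Sum>x\<in>U. cover_count x) = (\<Sum>s\<in>S. \<Sum>x\<in>U. of_bool (x \<in> B s))"
    unfolding cover_count_eq_sum by (rule sum.swap)
  also have "\<dots> = (\<Sum>s\<in>S. real (card (B s)))"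
    using subset sum_of_bool_mem_subset by simp
  finally show ?thesis .
qed

lemma sum_cover_count_squared:
  "(\<Sum>x\<in>U. (cover_count x)\<^sup>2) = (\<Sum>s\<in>S. \<Sum>s'\<in>S. real (card (B s \<inter> B s')))"
proof -
  have "(\<Sum>x\<in>U. (cover_count x)\<^sup>2) = (\<Sum>x\<in>U. \<Sum>s\<in>S. \<Sum>s'\<in>S. of_bool (x \<in> B s \<inter> B s'))"
    unfolding cover_count_eq_sum power2_eq_square sum_product by (simp add: of_bool_conj)
  also have "\<dots> = (\<Sum>s\<in>S. \<Sum>s'\<in>S. \<Sum>x\<in>U. of_bool (x \<in> B s \<inter> B s'))"
    by (subst sum.swap) (simp add: sum.swap[of _ U])
  also have "\<dots> = (\<Sum>s\<in>S. \<Sum>s'\<in>S. real (card (B s \<inter> B s')))"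
    using subset by (intro sum.cong refl sum_of_bool_mem_subset) blast
  finally show ?thesis .
qed

context
  fixes Q M k :: real
  assumes card_U: "real (card U) = k * Q" and k: "k > 0" and M: "M \<ge> 0"
    and card_B: "\<And>s. s \<in> S \<Longrightarrow> Q - M \<le> card (B s) \<and> card (B s) \<le> Q"
    and card_inter_B: "\<And>s s'. s \<in> S \<Longrightarrow> s' \<in> S \<Longrightarrow> s \<noteq> s' \<Longrightarrow> k * card (B s \<inter> B s') \<le> Q + M"
begin

lemma sum_cover_count_squared_le:
  "(\<Sum>x\<in>U. (cover_count x)\<^sup>2) \<le> card S * Q + (real (card S))\<^sup>2 * ((Q + M) / k)"
proof -
  have Q: "Q \<ge> 0"
    using card_U k by (metis of_nat_0_le_iff zero_le_mult_iff linorder_not_le)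
  have row: "(\<Sum>s'\<in>S. real (card (B s \<inter> B s'))) \<le> Q + card S * ((Q + M) / k)" if s: "s \<in> S" for s
  proof -
    have "(\<Sum>s'\<in>S. real (card (B s \<inter> B s')))
        = card (B s \<inter> B s) + (\<Sum>s'\<in>S - {s}. real (card (B s \<inter> B s')))"
      using finite(2) s by (rule sum.remove)
    also have "\<dots> \<le> Q + (\<Sum>s'\<in>S - {s}. (Q + M) / k)"
      using card_B[OF s] card_inter_B[OF s] k
      by (intro add_mono sum_mono) (auto simp: pos_le_divide_eq mult.commute)
    also have "\<dots> = Q + card (S - {s}) * ((Q + M) / k)"
      by simp
    also have "\<dots> \<le> Q + card S * ((Q + M) / k)"
      using card_Diff1_le[of S s] Q M k
      by (intro add_left_mono mult_right_mono) auto
    finally show ?thesis .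
  qed
  have "(\<Sum>x\<in>U. (cover_count x)\<^sup>2) \<le> (\<Sum>s\<in>S. Q + card S * ((Q + M) / k))"
    unfolding sum_cover_count_squared using row by (rule sum_mono)
  then show ?thesis
    by (simp add: power2_eq_square algebra_simps)
qed

lemma cover_count_variance_le:
  "(\<Sum>x\<in>U. (cover_count x - card S / k)\<^sup>2) \<le> card S * Q + 3 * (real (card S))\<^sup>2 * M / k"
proof -
  let ?n = "real (card S)"
  have first: "?n * (Q - M) \<le> (\<Sum>x\<in>U. cover_count x)"
    unfolding sum_cover_count using card_B sum_bounded_below[of S "Q - M"] by auto
  have "(\<Sum>x\<in>U. (cover_count x - ?n / k)\<^sup>2)
      = (\<Sum>x\<in>U. (cover_count x)\<^sup>2 - 2 * (?n / k) * cover_count x + (?n / k)\<^sup>2)"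
    by (intro sum.cong refl) (simp add: power2_diff algebra_simps)
  also have "\<dots> = (\<Sum>x\<in>U. (cover_count x)\<^sup>2) - 2 * (?n / k) * (\<Sum>x\<in>U. cover_count x) + card U * (?n / k)\<^sup>2"
    by (simp only: sum.distrib sum_subtractf sum_distrib_left[symmetric] sum_constant of_nat_id)
  also have "\<dots> \<le> ?n * Q + ?n\<^sup>2 * ((Q + M) / k) - 2 * (?n / k) * (?n * (Q - M)) + k * Q * (?n / k)\<^sup>2"
    using sum_cover_count_squared_le first k card_U
    by (intro add_mono diff_mono mult_left_mono order.refl) auto
  also have "\<dots> = ?n * Q + 3 * ?n\<^sup>2 * M / k"
    using k by (simp add: field_simps power2_eq_square)
  finally show ?thesis .
qed

lemma card_incidences_le:
  fixes N :: real
  assumes P: "P \<subseteq> U" and N: "card P \<le> N" "card S \<le> N" and Q: "Q = M\<^sup>2"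
  shows "card {(p, s). p \<in> P \<and> s \<in> S \<and> p \<in> B s} \<le> 3 * (N\<^sup>2 / k + M * N)"
proof -
  let ?I = "real (card {(p, s). p \<in> P \<and> s \<in> S \<and> p \<in> B s})"
  have finP: "finite P"
    using P finite(1) finite_subset by blast
  have "{(p, s). p \<in> P \<and> s \<in> S \<and> p \<in> B s} = Sigma P (\<lambda>p. {s \<in> S. p \<in> B s})"
    by auto
  then have I: "?I = (\<Sum>p\<in>P. cover_count p)"
    unfolding cover_count_def using finP finite(2) by (simp add: card_SigmaI)
  have N0: "N \<ge> 0"
    using N(1) of_nat_0_le_iff order.trans by blast
  define A where "A = N\<^sup>2 / k"
  have A: "A \<ge> 0"
    unfolding A_def using k by simp
  have "(?I - card P * (card S / k))\<^sup>2 \<le> card P * (\<Sum>x\<in>U. (cover_count x - card S / k)\<^sup>2)"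
    unfolding I by (rule sum_deviation_squared_le[OF finite(1) P])
  also have "\<dots> \<le> N * (N * Q + 3 * N\<^sup>2 * M / k)"
  proof (rule mult_mono[OF N(1) order.trans[OF cover_count_variance_le]])
    show "card S * Q + 3 * (real (card S))\<^sup>2 * M / k \<le> N * Q + 3 * N\<^sup>2 * M / k"
      using N(2) k M Q by (intro add_mono mult_right_mono divide_right_mono power_mono) auto
  qed (use N0 in \<open>auto intro: sum_nonneg\<close>)
  also have "\<dots> \<le> (M * N + 2 * A)\<^sup>2"
    using A M N0 k unfolding Q A_def by (simp add: power2_eq_square field_simps)
  finally have "?I - card P * (card S / k) \<le> M * N + 2 * A"
    using A M N0 by (meson power2_le_imp_le add_nonneg_nonneg mult_nonneg_nonneg zero_le_numeral)
  moreover have "card P * (card S / k) \<le> A"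
  proof -
    have "real (card P) * card S \<le> N * N"
      using N N0 by (intro mult_mono) auto
    then have "real (card P) * card S / k \<le> N * N / k"
      using k by (simp add: divide_right_mono)
    then show ?thesis
      unfolding A_def power2_eq_square by simp
  qed
  moreover have "M * N \<ge> 0"
    using M N0 by simp
  ultimately show ?thesis
    unfolding A_def[symmetric] by argo
qed

end

end

section \<open>The incidence theorem\<close>

context finite_field_3_mod_4
begin

lemma card_square_radius_sphere:
  assumes d: "d mod 4 = 3" and s: "s \<in> square_radius_spheres R d"
  shows "int q ^ (d - 1) - int q ^ ((d - 1) div 2) \<le> card (fq_sphere R d s)"
    and "card (fq_sphere R d s) \<le> int q ^ (d - 1)"
proof -
  obtain c \<rho> where c: "c \<in> fq_space R d" and \<rho>: "\<rho> \<in> carrier R" and s_eq: "s = (c, \<rho> \<otimes> \<rho>)"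
    using s unfolding square_radius_spheres_def by auto
  then have card_eq: "card (fq_sphere R d s) = sphere_count R d (\<rho> \<otimes> \<rho>)"
    using card_fq_sphere by simp
  show "card (fq_sphere R d s) \<le> int q ^ (d - 1)"
    unfolding card_eq by (rule sphere_count_radius_square_le[OF d \<rho>])
  show "int q ^ (d - 1) - int q ^ ((d - 1) div 2) \<le> card (fq_sphere R d s)"
    unfolding card_eq using d \<rho> sphere_count_radius_zero sphere_count_radius_square by (cases "\<rho> = \<zero>") auto
qed

lemma incidence_bound:
  fixes N :: real
  assumes d: "d mod 4 = 3" and P: "P \<subseteq> fq_space R d" and S: "S \<subseteq> square_radius_spheres R d"
    and N: "card P \<le> N" "card S \<le> N"
  shows "incidences R d P S \<le> 3 * (N\<^sup>2 / q + real q ^ ((d - 1) div 2) * N)"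
proof -
  have "d - 1 = 2 * ((d - 1) div 2)" "d = Suc (d - 1)"
    using d by presburger+
  then have powers: "real q ^ (d - 1) = (real q ^ ((d - 1) div 2))\<^sup>2"
      "real (card (fq_space R d)) = q * real q ^ (d - 1)"
    using card_fq_space[OF finite_carrier, of d] by (metis power_mult power2_eq_square mult.commute,
        metis of_nat_power power_Suc)
  have "incidences R d P S \<le> 3 * (N\<^sup>2 / q + real q ^ ((d - 1) div 2) * N)"
    unfolding incidences_def
  proof (rule card_incidences_le[OF _ _ _ powers(2) _ _ _ _ P N powers(1)])
    show "finite S"
      using S finite_square_radius_spheres[OF finite_carrier] finite_subset by blast
    fix s s' assume s: "s \<in> S" and s': "s' \<in> S"
    have "real_of_int (int q ^ (d - 1) - int q ^ ((d - 1) div 2)) \<le> real_of_int (card (fq_sphere R d s))"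
      "real_of_int (card (fq_sphere R d s)) \<le> real_of_int (int q ^ (d - 1))"
      using card_square_radius_sphere[OF d, of s] s S by (simp_all only: of_int_le_iff subsetD)
    then show "real q ^ (d - 1) - real q ^ ((d - 1) div 2) \<le> card (fq_sphere R d s)
      \<and> card (fq_sphere R d s) \<le> real q ^ (d - 1)"
      by simp
    assume "s \<noteq> s'"
    moreover have "s \<in> square_radius_spheres R d" "s' \<in> square_radius_spheres R d"
      using s s' S by auto
    ultimately have "real_of_int (int q * card (fq_sphere R d s \<inter> fq_sphere R d s'))
        \<le> real_of_int (int q ^ (d - 1) + int q ^ ((d - 1) div 2))"
      using card_sphere_inter_bound[OF d] by (simp only: of_int_le_iff)
    then show "q * real (card (fq_sphere R d s \<inter> fq_sphere R d s'))
        \<le> real q ^ (d - 1) + real q ^ ((d - 1) div 2)"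
      by simp
  qed (use card_gt_2 in \<open>simp_all add: finite_carrier fq_sphere_subset\<close>)
  then show ?thesis
    by simp
qed

end

theorem theorem1p4:
  "\<exists>C::real. C > 0 \<and>
    (\<forall>(R :: nat ring) (d::nat) (P :: nat list set) (S :: (nat list \<times> nat) set) (N::real).
       field R \<and> finite (carrier R) \<and>
       (\<exists>p k. Factorial_Ring.prime (p::nat) \<and> odd p \<and> k > 0 \<and> card (carrier R) = p ^ k) \<and>
       card (carrier R) mod 4 = 3 \<and>
       d > 0 \<and> d mod 4 = 3 \<and>
       P \<subseteq> fq_space R d \<and> S \<subseteq> square_radius_spheres R d \<and>
       real (card P) \<le> N \<and> real (card S) \<le> N
       \<longrightarrow> real (incidences R d P S)
             \<le> C * (N ^ 2 / real (card (carrier R))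
                    + real (card (carrier R)) powr ((real d - 1) / 2) * N))"
proof (intro exI[of _ 3] conjI allI impI, goal_cases)
  case (2 R d P S N)
  then interpret finite_field_3_mod_4 R
    by (intro finite_field_3_mod_4I) auto
  define m where "m = (d - 1) div 2"
  have "d mod 4 = 3"
    using 2 by blast
  then have "d = 2 * m + 1"
    unfolding m_def by presburger
  then have "real q powr ((real d - 1) / 2) = real q ^ ((d - 1) div 2)"
    using card_gt_2 by (simp add: powr_realpow m_def[symmetric])
  then show ?case
    using incidence_bound[of d P S N] 2 by simp
qed simp

end
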